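(* Let $k>2$, let $T_k$ be the theory of the countable universal homogeneous $k$-uniform hypergraph in $\mathcal{L}_k=\{R\}$ ($R$ $k$-ary), $\mathcal{U}$ a monster model of $T_k$ and $M\prec\mathcal{U}$ a countable elementary submodel. Suppose that $W$ is a Borel $k$-ary hypergraphon. Then $\mu_W$ is Borel-definable over $M$: for every $\mathcal{L}_k$-formula $\varphi(x,\bar y)$ the map $S_{\bar y}(M)\to[0,1]$, $\operatorname{tp}(\bar b/M)\mapsto\mu_W(\varphi(x,\bar b))$, is Borel.
   Context: Local type spaces. For a finite set $I$ with $1\le|I|\le k-1$, $S^{\flat}_I$ is the space of complete $R$-types over $M$ in the variables $\{x_i:i\in I\}$: maximal consistent sets of formulas $R(\bar x_I,D)$, $\neg R(\bar x_I,D)$ with $D\subseteq M$, $|D|=k-|I|$ (independent of the order of variables; same for any set of named variables). $\lambda_I$ is the Borel probability measure on $S^{\flat}_I$ such that for distinct $D_1,\dots,D_{n+m}\subseteq M$ of size $k-|I|$ the set of types containing $R(\bar x_I,D_l)$ for $l\le n$ and $\neg R(\bar x_I,D_l)$ for $n<l\le n+m$ has measure $2^{-(n+m)}$. For $D\subseteq\mathcal{U}$ with $1\le|D|\le k-1$, $\operatorname{tp}^{\flat}(D)=\{R(\bar x,E):E\subseteq M,|E|=k-|D|,\mathcal{U}\models R(D,E)\}\cup\{\neg R(\bar x,E):\mathcal{U}\models\neg R(D,E)\}$. Hypergraphons. $\mathfrak{m}$ is Lebesgue measure. A $k$-ary hypergraphon is a measurable $W\colon\prod_{I\subseteq[k],1\le|I|\le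 k-1}[0,1]\to[0,1]$ invariant under the action of $\mathrm{Sym}(k)$ permuting the index sets; Borel if Borel measurable. Fix for each $1\le j\le k-1$ a measure isomorphism between $(S^{\flat}_{[j]},\lambda_{[j]})$ and $([0,1],\mathfrak{m})$, transported to every $S^{\flat}_I$ with $|I|=j$; via these, $W$ is regarded as a function on $\prod_{I}S^{\flat}_I$. The measure $\mu_W$. For finite $B\subseteq M$ and $C\subseteq\mathcal{U}\setminus M$, a complete formula over $BC$ is $\Xi(x,B,C)=\bigwedge R^{\epsilon(B_0,C_0)}(x,B_0,C_0)$ over all $B_0\subseteq B$, $C_0\subseteq C$ with $|B_0|+|C_0|=k-1$, $\epsilon(B_0,C_0)\in\{1,-1\}$, $R^1=R$, $R^{-1}=\neg R$; $\Xi_B$ is the subconjunction with $C_0=\emptyset$. Let $\mathbb{S}_C=\prod_{C_0\subseteq C,1\le|C_0|\le k-2}S^{\flat}_{\{x\}\cup\bar z_{C_0}}$ with fresh variables $\bar z_{C_0}$; $\bar q=(q_{C_0})$; $\bar\lambda$ the product of the $\lambda$-measures on $S^{\flat}_{\{x\}}\times\mathbb{S}_C$. For $C_0=\{c_1,\dots,c_{k-1}\}\subseteq C$, $(p,\mathring{\mathbf{q}}_{[C_0]})$ is the argument of $W$ obtained by identifying $[k]$ with $\{x,c_1,\dots,c_{k-1}\}$, assigning to $\{x\}$ the type $p$, to nonempty $D\subseteq C_0$ the type $\operatorname{tp}^{\flat}(D)$, and to $\{x\}\cup D$ ($\emptyset\ne D\subsetneq C_0$) the type $q_D$. With $W^1=W$,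 $W^{-1}=1-W$: $\mu_W(\Xi)=\int_{p\in S^{\flat}_{\{x\}}}\int_{\bar q\in\mathbb{S}_C}\mathbf{1}_{\Xi_B}(p)\prod_{C_0\subseteq C,1\le|C_0|\le k-2}\prod_{B_0\subseteq B,|B_0|=k-1-|C_0|}\mathbf{1}[R^{\epsilon(B_0,C_0)}(x,B_0,\bar z_{C_0})\in q_{C_0}]\prod_{C_0\subseteq C,|C_0|=k-1}W^{\epsilon(\emptyset,C_0)}(p,\mathring{\mathbf{q}}_{[C_0]})\,d\bar\lambda$. Finite sets get measure $0$ and $\mu_W$ is extended additively; this gives an $M$-invariant Keisler measure on $\mathcal{L}_x(\mathcal{U})$, so the map in the claim is well defined. *)

theory Defs
  imports "HOL-Probability.Probability"
begin

definition ksubsets :: "'a set \<Rightarrow> nat \<Rightarrow> 'a set set" where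
  "ksubsets A m = {D. D \<subseteq> A \<and> finite D \<and> card D = m}"

datatype 'a htm = HVar nat | HPar 'a

datatype 'a hfm =
    HRel "'a htm list"
  | HEq "'a htm" "'a htm"
  | HNeg "'a hfm"
  | HConj "'a hfm" "'a hfm"
  | HEx nat "'a hfm"

fun tval :: "(nat \<Rightarrow> 'a) \<Rightarrow> 'a htm \<Rightarrow> 'a" where
  "tval e (HVar i) = e i"
| "tval e (HPar a) = a"

fun tfv :: "'a htm \<Rightarrow> nat set" where
  "tfv (HVar i) = {i}"
| "tfv (HPar a) = {}"

fun tpar :: "'a htm \<Rightarrow> 'a set" where
  "tpar (HVar i) = {}"
| "tpar (HPar a) = {a}"

fun hfv :: "'a hfm \<Rightarrow> nat set" where
  "hfv (HRel ts) = (\<Union>t\<in>set ts. tfv t)"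
| "hfv (HEq s t) = tfv s \<union> tfv t"
| "hfv (HNeg \<phi>) = hfv \<phi>"
| "hfv (HConj \<phi> \<psi>) = hfv \<phi> \<union> hfv \<psi>"
| "hfv (HEx i \<phi>) = hfv \<phi> - {i}"

fun hpar :: "'a hfm \<Rightarrow> 'a set" where
  "hpar (HRel ts) = (\<Union>t\<in>set ts. tpar t)"
| "hpar (HEq s t) = tpar s \<union> tpar t"
| "hpar (HNeg \<phi>) = hpar \<phi>"
| "hpar (HConj \<phi> \<psi>) = hpar \<phi> \<union> hpar \<psi>"
| "hpar (HEx i \<phi>) = hpar \<phi>"

fun hwf :: "nat \<Rightarrow> 'a hfm \<Rightarrow> bool" where
  "hwf k (HRel ts) = (length ts = k)"
| "hwf k (HEq s t) = True"
| "hwf k (HNeg \<phi>) = hwf k \<phi>"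
| "hwf k (HConj \<phi> \<psi>) = (hwf k \<phi> \<and> hwf k \<psi>)"
| "hwf k (HEx i \<phi>) = hwf k \<phi>"

text \<open>Satisfaction in the k-uniform hypergraph with vertex set U and edge set E
  (a set of k-element subsets of U); R(t1..tk) holds iff the values form an edge
  (so R is symmetric and false on tuples with repetitions).\<close>
fun hsat :: "nat \<Rightarrow> 'a set \<Rightarrow> 'a set set \<Rightarrow> (nat \<Rightarrow> 'a) \<Rightarrow> 'a hfm \<Rightarrow> bool" where
  "hsat k U E e (HRel ts) = (length ts = k \<and> set (map (tval e) ts) \<in> E)"
| "hsat k U E e (HEq s t) = (tval e s = tval e t)"
| "hsat k U E e (HNeg \<phi>) = (\<not> hsat k U E e \<phi>)"
| "hsat k U E e (HConj \<phi> \<psi>) = (hsat k U E e \<phi> \<and> hsat k U E e \<psi>)"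
| "hsat k U E e (HEx i \<phi>) = (\<exists>a\<in>U. hsat k U E (e(i := a)) \<phi>)"

text \<open>Models of T_k: k-uniform hypergraphs satisfying all extension axioms.\<close>
definition model_Tk :: "nat \<Rightarrow> 'a set \<Rightarrow> 'a set set \<Rightarrow> bool" where
  "model_Tk k U E \<longleftrightarrow> U \<noteq> {} \<and> E \<subseteq> ksubsets U k \<and>
     (\<forall>A \<A>. finite A \<and> A \<subseteq> U \<and> \<A> \<subseteq> ksubsets A (k - 1) \<longrightarrow>
        (\<exists>x\<in>U - A. \<forall>S\<in>ksubsets A (k - 1). (insert x S \<in> E) \<longleftrightarrow> S \<in> \<A>))"

definition induced_edges :: "'a set set \<Rightarrow> 'a set \<Rightarrow> 'a set set" where
  "induced_edges E M = {S\<in>E. S \<subseteq> M}"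

definition elem_sub :: "nat \<Rightarrow> 'a set \<Rightarrow> 'a set set \<Rightarrow> 'a set \<Rightarrow> bool" where
  "elem_sub k U E M \<longleftrightarrow> M \<noteq> {} \<and> M \<subseteq> U \<and>
     (\<forall>\<phi> e. hpar \<phi> \<subseteq> M \<and> (\<forall>i. e i \<in> M) \<longrightarrow>
        (hsat k M (induced_edges E M) e \<phi> \<longleftrightarrow> hsat k U E e \<phi>))"

definition aleph1_saturated :: "nat \<Rightarrow> 'a set \<Rightarrow> 'a set set \<Rightarrow> bool" where
  "aleph1_saturated k U E \<longleftrightarrow>
     (\<forall>A \<Sigma>. countable A \<and> A \<subseteq> U \<and> (\<forall>\<psi>\<in>\<Sigma>. hpar \<psi> \<subseteq> A \<and> hfv \<psi> \<subseteq> {0}) \<and>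
        (\<forall>F. F \<subseteq> \<Sigma> \<and> finite F \<longrightarrow> (\<exists>a\<in>U. \<forall>\<psi>\<in>F. hsat k U E (\<lambda>_. a) \<psi>)) \<longrightarrow>
        (\<exists>a\<in>U. \<forall>\<psi>\<in>\<Sigma>. hsat k U E (\<lambda>_. a) \<psi>))"

definition LM :: "'a set \<Rightarrow> nat set \<Rightarrow> 'a hfm set" where
  "LM M V = {\<psi>. hpar \<psi> \<subseteq> M \<and> hfv \<psi> \<subseteq> V}"

definition types :: "nat \<Rightarrow> 'a set \<Rightarrow> 'a set set \<Rightarrow> nat \<Rightarrow> 'a hfm set set" where
  "types k M E n = {p. p \<subseteq> LM M {1..n} \<and>
      (\<forall>\<psi>\<in>LM M {1..n}. \<psi> \<in> p \<or> HNeg \<psi> \<in> p) \<and>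
      (\<forall>F. F \<subseteq> p \<and> finite F \<longrightarrow>
          (\<exists>e. (\<forall>i. e i \<in> M) \<and> (\<forall>\<psi>\<in>F. hsat k M (induced_edges E M) e \<psi>)))}"

definition stone_basic :: "nat \<Rightarrow> 'a set \<Rightarrow> 'a set set \<Rightarrow> nat \<Rightarrow> 'a hfm \<Rightarrow> 'a hfm set set" where
  "stone_basic k M E n \<psi> = {p\<in>types k M E n. \<psi> \<in> p}"

definition stone_open :: "nat \<Rightarrow> 'a set \<Rightarrow> 'a set set \<Rightarrow> nat \<Rightarrow> 'a hfm set set set" where
  "stone_open k M E n = {\<Union>F | F. F \<subseteq> stone_basic k M E n ` LM M {1..n}}"

definition stone_borel :: "nat \<Rightarrow> 'a set \<Rightarrow> 'a set set \<Rightarrow> nat \<Rightarrow> 'a hfm set measure" where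
  "stone_borel k M E n = sigma (types k M E n) (stone_open k M E n)"

text \<open>environment: variable 0 is x, variable i (1 <= i <= n) is the i-th entry of bs\<close>
definition benv :: "'a \<Rightarrow> 'a list \<Rightarrow> nat \<Rightarrow> 'a" where
  "benv a bs i = (if i = 0 then a else bs ! (i - 1))"

definition tp :: "nat \<Rightarrow> 'a set \<Rightarrow> 'a set set \<Rightarrow> 'a set \<Rightarrow> 'a list \<Rightarrow> 'a hfm set" where
  "tp k U E M bs = {\<psi>\<in>LM M {1..length bs}. hsat k U E (benv undefined bs) \<psi>}"

text \<open>A complete R-type in j variables over M is a truth assignment to the formulas
  R(x_I, D), D a (k-j)-subset of M; lambda is the fair coin product measure.\<close>
definition lam :: "nat \<Rightarrow> 'a set \<Rightarrow> nat \<Rightarrow> ('a set \<Rightarrow> bool) measure" where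
  "lam k M j = PiM (ksubsets M (k - j)) (\<lambda>_. measure_pmf (bernoulli_pmf (1/2)))"

definition unit_leb :: "real measure" where
  "unit_leb = restrict_space lborel {0..1}"

definition measure_iso :: "'b measure \<Rightarrow> 'c measure \<Rightarrow> ('b \<Rightarrow> 'c) \<Rightarrow> bool" where
  "measure_iso A B f \<longleftrightarrow> f \<in> A \<rightarrow>\<^sub>M B \<and> distr A B f = B \<and>
     (\<exists>h\<in>B \<rightarrow>\<^sub>M A. distr B A h = A \<and> (AE x in A. h (f x) = x) \<and> (AE y in B. f (h y) = y))"

definition Ik :: "nat \<Rightarrow> nat set set" where
  "Ik k = {I. I \<subseteq> {1..k} \<and> 1 \<le> card I \<and> card I \<le> k - 1}"

definition hg_space :: "nat \<Rightarrow> (nat set \<Rightarrow> real) measure" where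
  "hg_space k = PiM (Ik k) (\<lambda>_. unit_leb)"

definition borel_hypergraphon :: "nat \<Rightarrow> ((nat set \<Rightarrow> real) \<Rightarrow> real) \<Rightarrow> bool" where
  "borel_hypergraphon k W \<longleftrightarrow> W \<in> borel_measurable (hg_space k) \<and>
     (\<forall>t\<in>space (hg_space k). 0 \<le> W t \<and> W t \<le> 1) \<and>
     (\<forall>\<sigma> t. bij_betw \<sigma> {1..k} {1..k} \<and> t \<in> space (hg_space k) \<longrightarrow>
        W (\<lambda>I\<in>Ik k. t (\<sigma> ` I)) = W t)"

definition tpflat :: "nat \<Rightarrow> 'a set set \<Rightarrow> 'a set \<Rightarrow> 'a set \<Rightarrow> ('a set \<Rightarrow> bool)" where
  "tpflat k E M D = (\<lambda>F\<in>ksubsets M (k - card D). D \<union> F \<in> E)"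

text \<open>The argument (p, q_[C0]) of W, identifying [k] with {x, c_1, ..., c_(k-1)}
  via 1 |-> x and an enumeration of C0 by {2..k}.\<close>
definition Warg :: "nat \<Rightarrow> 'a set set \<Rightarrow> 'a set \<Rightarrow> (nat \<Rightarrow> ('a set \<Rightarrow> bool) \<Rightarrow> real)
    \<Rightarrow> ('a set \<Rightarrow> bool) \<Rightarrow> ('a set \<Rightarrow> 'a set \<Rightarrow> bool) \<Rightarrow> 'a set \<Rightarrow> (nat set \<Rightarrow> real)" where
  "Warg k E M isos p q C0 =
     (let g = (SOME g. bij_betw g {2..k} C0) in
      (\<lambda>I\<in>Ik k. if I = {1} then isos 1 p
                 else if 1 \<in> I then isos (card I) (q (g ` (I - {1})))
                 else isos (card I) (tpflat k E M (g ` I))))"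

definition sgnW :: "bool \<Rightarrow> real \<Rightarrow> real" where
  "sgnW b w = (if b then w else 1 - w)"

text \<open>mu_W of the complete formula Xi determined by eps over the finite parameter set A
  (B = A inter M, C = A - M).\<close>
definition muXi :: "nat \<Rightarrow> 'a set set \<Rightarrow> 'a set \<Rightarrow> (nat \<Rightarrow> ('a set \<Rightarrow> bool) \<Rightarrow> real)
    \<Rightarrow> ((nat set \<Rightarrow> real) \<Rightarrow> real) \<Rightarrow> 'a set \<Rightarrow> ('a set \<Rightarrow> bool) \<Rightarrow> real" where
  "muXi k E M isos W A \<epsilon> =
     (let B = A \<inter> M; C = A - M;
          Cs = {C0. C0 \<subseteq> C \<and> 1 \<le> card C0 \<and> card C0 \<le> k - 2}
      in integral\<^sup>L (lam k M 1 \<Otimes>\<^sub>M PiM Cs (\<lambda>C0. lam k M (1 + card C0)))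
           (\<lambda>(p, q). of_bool (\<forall>B0\<in>ksubsets B (k - 1). p B0 = \<epsilon> B0)
              * (\<Prod>C0\<in>Cs. \<Prod>B0\<in>ksubsets B (k - 1 - card C0). of_bool (q C0 B0 = \<epsilon> (B0 \<union> C0)))
              * (\<Prod>C0\<in>ksubsets C (k - 1). sgnW (\<epsilon> C0) (W (Warg k E M isos p q C0)))))"

text \<open>mu_W(phi(x, bs)): sum of mu_W(Xi) over the complete formulas Xi over A = set bs
  whose realizations (outside the finite set A) lie in phi(U, bs).\<close>
definition muW :: "nat \<Rightarrow> 'a set \<Rightarrow> 'a set set \<Rightarrow> 'a set \<Rightarrow> (nat \<Rightarrow> ('a set \<Rightarrow> bool) \<Rightarrow> real)
    \<Rightarrow> ((nat set \<Rightarrow> real) \<Rightarrow> real) \<Rightarrow> 'a hfm \<Rightarrow> 'a list \<Rightarrow> real" where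
  "muW k U E M isos W \<phi> bs =
     (let A = set bs;
          Xi = (\<lambda>\<epsilon>. {a\<in>U - A. \<forall>S\<in>ksubsets A (k - 1). (insert a S \<in> E) = \<epsilon> S})
      in \<Sum>\<epsilon>\<in>{\<epsilon>\<in>PiE (ksubsets A (k - 1)) (\<lambda>_. UNIV).
                 Xi \<epsilon> \<subseteq> {a\<in>U. hsat k U E (benv a bs) \<phi>}}. muXi k E M isos W A \<epsilon>)"

end

theory Submission
  imports Defs
begin

text \<open>
  For a complete formula \<open>\<Xi>\<close> over the parameters \<open>A = {b\<^sub>1, \<dots>, b\<^sub>n}\<close>, \<open>\<mu>\<^sub>W(\<Xi>)\<close> is an integral
  against a product of the measures \<open>\<lambda>\<^sub>I\<close> whose integrand depends on the parameters only through
  \<open>A \<inter> M\<close> and the \<open>R\<close>-types \<open>tp\<^sup>\<flat>(D)\<close> of the sets \<open>D \<subseteq> A - M\<close>. By the symmetry of \<open>W\<close>, and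
  since reindexing a product of measures preserves it, \<open>\<mu>\<^sub>W(\<Xi>)\<close> is unchanged when the parameters
  outside \<open>M\<close> are renamed; we rename them to fixed elements \<open>c\<^sub>j \<notin> M\<close> (which exist by
  saturation), \<open>c\<^sub>j\<close> replacing the parameter that first occurs at position \<open>j\<close> of \<open>b\<close>.
  After this renaming, all data entering \<open>\<mu>\<^sub>W(\<phi>(x, b))\<close> is read off from \<open>tp(b/M)\<close>: its shape
  (which \<open>b\<^sub>i\<close> lie in \<open>M\<close> and which coincide) takes countably many values, each a Borel condition
  on the type; the edges among \<open>M\<close> and the \<open>c\<^sub>j\<close> are given by atomic formulas in the type; and
  whether \<open>\<Xi>\<close> contributes is decided by a single \<open>L(M)\<close>-formula. Since the integrand is jointly
  measurable in the type and the integration variable, integrating it gives a Borel function of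
  the type.
\<close>

section \<open>The integral representation of \<open>\<mu>\<^sub>W(\<Xi>)\<close>\<close>

lemma finite_ksubsets: "finite A \<Longrightarrow> finite (ksubsets A m)"
  unfolding ksubsets_def by (rule finite_subset[of _ "Pow A"]) auto

lemma ksubsets_mono: "A \<subseteq> B \<Longrightarrow> ksubsets A m \<subseteq> ksubsets B m"
  unfolding ksubsets_def by auto

lemma bij_betw_image_subsets:
  assumes "bij_betw \<rho> A' A"
  shows "bij_betw ((`) \<rho>) {X. X \<subseteq> A' \<and> Q (finite X) (card X)} {X. X \<subseteq> A \<and> Q (finite X) (card X)}"
proof (rule bij_betw_subset[OF bij_betw_Pow[OF assms]])
  have inj: "inj_on \<rho> A'" and im: "\<rho> ` A' = A"
    using assms by (auto simp: bij_betw_def)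
  have fc: "finite (\<rho> ` X) = finite X \<and> card (\<rho> ` X) = card X" if "X \<subseteq> A'" for X
    using inj_on_subset[OF inj that] finite_image_iff card_image by blast
  show "(`) \<rho> ` {X. X \<subseteq> A' \<and> Q (finite X) (card X)} = {X. X \<subseteq> A \<and> Q (finite X) (card X)}"
  proof (intro equalityI subsetI)
    fix Y assume "Y \<in> (`) \<rho> ` {X. X \<subseteq> A' \<and> Q (finite X) (card X)}"
    then show "Y \<in> {X. X \<subseteq> A \<and> Q (finite X) (card X)}" using fc im by auto
  next
    fix Y assume Y: "Y \<in> {X. X \<subseteq> A \<and> Q (finite X) (card X)}"
    define X where "X = A' \<inter> \<rho> -` Y"
    have "X \<subseteq> A'" and "\<rho> ` X = Y" using Y im unfolding X_def by auto
    then show "Y \<in> (`) \<rho> ` {X. X \<subseteq> A' \<and> Q (finite X) (card X)}" using fc Y by force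
  qed
qed auto

lemma bij_betw_image_ksubsets:
  "bij_betw \<rho> A' A \<Longrightarrow> bij_betw ((`) \<rho>) (ksubsets A' m) (ksubsets A m)"
  unfolding ksubsets_def using bij_betw_image_subsets[where Q = "\<lambda>f c. f \<and> c = m"] by blast

lemma sum_PiE_ksubsets_pullback:
  fixes F :: "('a set \<Rightarrow> 'b) \<Rightarrow> 'c::comm_monoid_add" and h :: "'a \<Rightarrow> 'd"
  assumes h: "bij_betw h A A'" and \<rho>: "\<And>x. x \<in> A \<Longrightarrow> \<rho> (h x) = x"
  shows "(\<Sum>\<epsilon>\<in>ksubsets A m \<rightarrow>\<^sub>E UNIV. F \<epsilon>) = (\<Sum>\<epsilon>\<in>ksubsets A' m \<rightarrow>\<^sub>E UNIV. F (\<lambda>S\<in>ksubsets A m. \<epsilon> (h ` S)))"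
proof -
  have h\<rho>: "h (\<rho> y) = y" if "y \<in> A'" for y
    using that h \<rho> unfolding bij_betw_def by auto
  have "bij_betw \<rho> A' A"
    by (rule bij_betw_byWitness[where f' = h]) (use h \<rho> h\<rho> in \<open>auto simp: bij_betw_def\<close>)
  have hS: "h ` S \<in> ksubsets A' m" if "S \<in> ksubsets A m" for S
    using that bij_betwE[OF bij_betw_image_ksubsets[OF h]] by blast
  have \<rho>S: "\<rho> ` S \<in> ksubsets A m" if "S \<in> ksubsets A' m" for S
    using that bij_betwE[OF bij_betw_image_ksubsets[OF \<open>bij_betw \<rho> A' A\<close>]] by blast
  have \<rho>hS: "\<rho> ` h ` S = S" if "S \<in> ksubsets A m" for S
    using that \<rho> unfolding ksubsets_def by (force simp: image_image)
  have h\<rho>S: "h ` \<rho> ` S = S" if "S \<in> ksubsets A' m" for S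
    using that h\<rho> unfolding ksubsets_def by (force simp: image_image)
  show ?thesis
  proof (rule sum.reindex_bij_witness[where j = "\<lambda>\<epsilon>. \<lambda>S\<in>ksubsets A' m. \<epsilon> (\<rho> ` S)"
        and i = "\<lambda>\<epsilon>. \<lambda>S\<in>ksubsets A m. \<epsilon> (h ` S)"])
    fix \<epsilon> :: "'a set \<Rightarrow> 'b" assume "\<epsilon> \<in> ksubsets A m \<rightarrow>\<^sub>E UNIV"
    then show "(\<lambda>S\<in>ksubsets A m. (\<lambda>S\<in>ksubsets A' m. \<epsilon> (\<rho> ` S)) (h ` S)) = \<epsilon>"
      using hS \<rho>hS by (auto simp: fun_eq_iff PiE_def extensional_def)
    then show "F ((\<lambda>S\<in>ksubsets A m. (\<lambda>S\<in>ksubsets A' m. \<epsilon> (\<rho> ` S)) (h ` S))) = F \<epsilon>" by simp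
  next
    fix \<epsilon> :: "'d set \<Rightarrow> 'b" assume "\<epsilon> \<in> ksubsets A' m \<rightarrow>\<^sub>E UNIV"
    then show "(\<lambda>S\<in>ksubsets A' m. (\<lambda>S\<in>ksubsets A m. \<epsilon> (h ` S)) (\<rho> ` S)) = \<epsilon>"
      using \<rho>S h\<rho>S by (auto simp: fun_eq_iff PiE_def extensional_def)
  qed auto
qed

lemma space_lam: "space (lam k M j) = PiE (ksubsets M (k - j)) (\<lambda>_. UNIV)"
  unfolding lam_def by (simp add: space_PiM)

lemma prob_space_lam: "prob_space (lam k M j)"
  unfolding lam_def by (intro prob_space_PiM prob_space_measure_pmf)

lemma measurable_lam_component:
  assumes "F \<in> ksubsets M (k - j)"
  shows "(\<lambda>t. t F) \<in> lam k M j \<rightarrow>\<^sub>M count_space UNIV"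
proof -
  have "(\<lambda>t. t F) \<in> lam k M j \<rightarrow>\<^sub>M measure_pmf (bernoulli_pmf (1/2))"
    unfolding lam_def using assms by (rule measurable_component_singleton)
  then show ?thesis by (simp cong: measurable_cong_sets)
qed

lemma tpflat_in_space_lam: "tpflat k E M D \<in> space (lam k M (card D))"
  unfolding space_lam tpflat_def by auto

lemma mem_IkD: "I \<in> Ik k \<Longrightarrow> I \<subseteq> {1..k} \<and> finite I \<and> 1 \<le> card I \<and> card I \<le> k - 1"
  unfolding Ik_def by (auto intro: finite_subset)

definition small_subsets :: "nat \<Rightarrow> 'a set \<Rightarrow> 'a set set" where
  "small_subsets k C = {C0. C0 \<subseteq> C \<and> 1 \<le> card C0 \<and> card C0 \<le> k - 2}"

definition lam_bar :: "nat \<Rightarrow> 'a set \<Rightarrow> 'a set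
    \<Rightarrow> (('a set \<Rightarrow> bool) \<times> ('a set \<Rightarrow> 'a set \<Rightarrow> bool)) measure" where
  "lam_bar k M C = lam k M 1 \<Otimes>\<^sub>M PiM (small_subsets k C) (\<lambda>C0. lam k M (1 + card C0))"

definition slot_enum :: "nat \<Rightarrow> 'a set \<Rightarrow> nat \<Rightarrow> 'a" where
  "slot_enum k C0 = (SOME g. bij_betw g {2..k} C0)"

text \<open>The entry at \<open>I\<close> of the argument \<open>(p, q[C\<^sub>0])\<close> of \<open>W\<close>, where \<open>[k]\<close> is identified with
  \<open>{x} \<union> C\<^sub>0\<close> via \<open>1 \<mapsto> x\<close> and a bijection \<open>g : {2..k} \<rightarrow> C\<^sub>0\<close>; \<open>tf D\<close> plays the role of
  \<open>tp\<^sup>\<flat>(D)\<close>.\<close>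
definition slot_type :: "('a set \<Rightarrow> 'a set \<Rightarrow> bool) \<Rightarrow> ('a set \<Rightarrow> bool) \<Rightarrow> ('a set \<Rightarrow> 'a set \<Rightarrow> bool)
    \<Rightarrow> (nat \<Rightarrow> 'a) \<Rightarrow> nat set \<Rightarrow> 'a set \<Rightarrow> bool" where
  "slot_type tf p q g I = (if I = {1} then p else if 1 \<in> I then q (g ` (I - {1})) else tf (g ` I))"

definition Warg_enum :: "nat \<Rightarrow> (nat \<Rightarrow> ('a set \<Rightarrow> bool) \<Rightarrow> real) \<Rightarrow> ('a set \<Rightarrow> 'a set \<Rightarrow> bool)
    \<Rightarrow> ('a set \<Rightarrow> bool) \<Rightarrow> ('a set \<Rightarrow> 'a set \<Rightarrow> bool) \<Rightarrow> (nat \<Rightarrow> 'a) \<Rightarrow> nat set \<Rightarrow> real" where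
  "Warg_enum k isos tf p q g = (\<lambda>I\<in>Ik k. isos (card I) (slot_type tf p q g I))"

definition Xi_integrand :: "nat \<Rightarrow> (nat \<Rightarrow> ('a set \<Rightarrow> bool) \<Rightarrow> real) \<Rightarrow> ((nat set \<Rightarrow> real) \<Rightarrow> real)
    \<Rightarrow> ('a set \<Rightarrow> 'a set \<Rightarrow> bool) \<Rightarrow> 'a set \<Rightarrow> 'a set \<Rightarrow> ('a set \<Rightarrow> bool)
    \<Rightarrow> ('a set \<Rightarrow> bool) \<times> ('a set \<Rightarrow> 'a set \<Rightarrow> bool) \<Rightarrow> real" where
  "Xi_integrand k isos W tf B C \<epsilon> = (\<lambda>(p, q).
      of_bool (\<forall>B0\<in>ksubsets B (k - 1). p B0 = \<epsilon> B0)
    * (\<Prod>C0\<in>small_subsets k C. \<Prod>B0\<in>ksubsets B (k - 1 - card C0). of_bool (q C0 B0 = \<epsilon> (B0 \<union> C0)))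
    * (\<Prod>C0\<in>ksubsets C (k - 1). sgnW (\<epsilon> C0) (W (Warg_enum k isos tf p q (slot_enum k C0)))))"

lemma Warg_eq_Warg_enum:
  "Warg k E M isos p q C0 = Warg_enum k isos (tpflat k E M) p q (slot_enum k C0)"
  unfolding Warg_def Warg_enum_def slot_type_def slot_enum_def Let_def
  by (intro restrict_ext) auto

lemma muXi_eq_integral:
  "muXi k E M isos W A \<epsilon>
     = integral\<^sup>L (lam_bar k M (A - M)) (Xi_integrand k isos W (tpflat k E M) (A \<inter> M) (A - M) \<epsilon>)"
  unfolding muXi_def lam_bar_def Xi_integrand_def small_subsets_def Warg_eq_Warg_enum Let_def ..

lemma bij_betw_image_small_subsets:
  "bij_betw \<rho> A' A \<Longrightarrow> bij_betw ((`) \<rho>) (small_subsets k A') (small_subsets k A)"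
  unfolding small_subsets_def using bij_betw_image_subsets[where Q = "\<lambda>f c. 1 \<le> c \<and> c \<le> k - 2"] by simp

lemma prob_space_lam_bar: "prob_space (lam_bar k M C)"
  unfolding lam_bar_def by (intro prob_space_pair prob_space_lam prob_space_PiM)

lemma bij_betw_slot_enum:
  assumes "C0 \<in> ksubsets C (k - 1)"
  shows "bij_betw (slot_enum k C0) {2..k} C0"
proof -
  have "finite C0" "card {2..k} = card C0" using assms unfolding ksubsets_def by auto
  then obtain g where "bij_betw g {2..k} C0" by (metis finite_atLeastAtMost finite_same_card_bij)
  then show ?thesis unfolding slot_enum_def by (metis someI)
qed

lemma subset_atLeast2_if_notin_1: "I \<subseteq> {1..k} \<Longrightarrow> 1 \<notin> I \<Longrightarrow> I \<subseteq> {2..(k::nat)}"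
  by (auto simp: subset_iff) (metis One_nat_def Suc_1 Suc_leI antisym_conv1)

lemma slot_image_with_1:
  assumes g: "bij_betw g {2..k} C0" and I: "I \<in> Ik k" and "1 \<in> I" "I \<noteq> {1}"
  shows "g ` (I - {1}) \<in> small_subsets k C0" and "1 + card (g ` (I - {1})) = card I"
proof -
  note Ip = mem_IkD[OF I]
  have sub: "I - {1} \<subseteq> {2..k}" using Ip by auto
  then have "inj_on g (I - {1})" using g by (auto simp: bij_betw_def intro: inj_on_subset)
  then have card: "card (g ` (I - {1})) = card I - 1"
    using Ip \<open>1 \<in> I\<close> by (simp add: card_image)
  have "I - {1} \<noteq> {}" using assms(3,4) by auto
  then have "card (I - {1}) \<ge> 1" using Ip by (simp add: Suc_leI card_gt_0_iff)
  then show "g ` (I - {1}) \<in> small_subsets k C0" and "1 + card (g ` (I - {1})) = card I"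
    using card Ip g sub \<open>1 \<in> I\<close> unfolding small_subsets_def bij_betw_def by auto
qed

lemma slot_image_without_1:
  assumes g: "bij_betw g {2..k} C0" and I: "I \<in> Ik k" and "1 \<notin> I"
  shows "g ` I \<subseteq> C0" and "g ` I \<noteq> {}" and "card (g ` I) = card I"
proof -
  note Ip = mem_IkD[OF I]
  have "I \<subseteq> {2..k}" using subset_atLeast2_if_notin_1 Ip \<open>1 \<notin> I\<close> by blast
  then show "g ` I \<subseteq> C0" and "g ` I \<noteq> {}" and "card (g ` I) = card I"
    using g Ip by (auto simp: bij_betw_def card_image inj_on_subset)
qed

lemma slot_type_with_1: "1 \<in> I \<Longrightarrow> I \<noteq> {1} \<Longrightarrow> slot_type tf p q g I = q (g ` (I - {1}))"
  unfolding slot_type_def by simp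

lemma slot_type_without_1: "1 \<notin> I \<Longrightarrow> slot_type tf p q g I = tf (g ` I)"
  unfolding slot_type_def by auto

lemma measurable_slot_type:
  assumes g: "bij_betw g {2..k} C0" and "C0 \<subseteq> C" and I: "I \<in> Ik k"
    and tf: "\<And>D. D \<subseteq> C \<Longrightarrow> D \<noteq> {} \<Longrightarrow> card D \<le> k - 1 \<Longrightarrow> (\<lambda>\<omega>. tf \<omega> D) \<in> P \<rightarrow>\<^sub>M lam k M (card D)"
  shows "(\<lambda>x. slot_type (tf (fst x)) (fst (snd x)) (snd (snd x)) g I) \<in> P \<Otimes>\<^sub>M lam_bar k M C \<rightarrow>\<^sub>M lam k M (card I)"
proof -
  consider "I = {1}" | "1 \<in> I" "I \<noteq> {1}" | "1 \<notin> I" by blast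
  then show ?thesis
  proof cases
    case 1
    then have "(\<lambda>x. slot_type (tf (fst x)) (fst (snd x)) (snd (snd x)) g I) = (\<lambda>x. fst (snd x))"
      by (simp add: slot_type_def)
    then show ?thesis using 1 unfolding lam_bar_def by simp
  next
    case 2
    note D = slot_image_with_1[OF g I 2]
    have "g ` (I - {1}) \<in> small_subsets k C"
      using D(1) \<open>C0 \<subseteq> C\<close> unfolding small_subsets_def by auto
    then have "(\<lambda>x. snd (snd x) (g ` (I - {1}))) \<in> P \<Otimes>\<^sub>M lam_bar k M C \<rightarrow>\<^sub>M lam k M (card I)"
      unfolding lam_bar_def D(2)[symmetric] by measurable
    then show ?thesis unfolding slot_type_with_1[OF 2] .
  next
    case 3
    note D = slot_image_without_1[OF g I 3]
    have "(\<lambda>\<omega>. tf \<omega> (g ` I)) \<in> P \<rightarrow>\<^sub>M lam k M (card I)"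
      using tf[of "g ` I"] D \<open>C0 \<subseteq> C\<close> mem_IkD[OF I] by auto
    then show ?thesis unfolding slot_type_without_1[OF 3] by simp
  qed
qed

lemma measurable_Warg_enum:
  assumes "bij_betw g {2..k} C0" and "C0 \<subseteq> C"
    and isos: "\<forall>j\<in>{1..k - 1}. isos j \<in> lam k M j \<rightarrow>\<^sub>M unit_leb"
    and "\<And>D. D \<subseteq> C \<Longrightarrow> D \<noteq> {} \<Longrightarrow> card D \<le> k - 1 \<Longrightarrow> (\<lambda>\<omega>. tf \<omega> D) \<in> P \<rightarrow>\<^sub>M lam k M (card D)"
  shows "(\<lambda>x. Warg_enum k isos (tf (fst x)) (fst (snd x)) (snd (snd x)) g) \<in> P \<Otimes>\<^sub>M lam_bar k M C \<rightarrow>\<^sub>M hg_space k"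
  unfolding Warg_enum_def hg_space_def
proof (rule measurable_restrict)
  fix I assume I: "I \<in> Ik k"
  then have "isos (card I) \<in> lam k M (card I) \<rightarrow>\<^sub>M unit_leb" using isos mem_IkD[OF I] by auto
  with measurable_slot_type[OF assms(1,2) I assms(4)]
  show "(\<lambda>x. isos (card I) (slot_type (tf (fst x)) (fst (snd x)) (snd (snd x)) g I)) \<in> P \<Otimes>\<^sub>M lam_bar k M C \<rightarrow>\<^sub>M unit_leb"
    by (rule measurable_compose)
qed

lemma measurable_Xi_integrand:
  assumes "finite B" "B \<subseteq> M"
    and isos: "\<forall>j\<in>{1..k - 1}. isos j \<in> lam k M j \<rightarrow>\<^sub>M unit_leb"
    and tf: "\<And>D. D \<subseteq> C \<Longrightarrow> D \<noteq> {} \<Longrightarrow> card D \<le> k - 1 \<Longrightarrow> (\<lambda>\<omega>. tf \<omega> D) \<in> P \<rightarrow>\<^sub>M lam k M (card D)"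
    and W: "W \<in> borel_measurable (hg_space k)"
  shows "(\<lambda>x. Xi_integrand k isos W (tf (fst x)) B C \<epsilon> (snd x)) \<in> borel_measurable (P \<Otimes>\<^sub>M lam_bar k M C)"
proof -
  let ?N = "P \<Otimes>\<^sub>M lam_bar k M C"
  have comp: "Measurable.pred (lam k M j) (\<lambda>t. t F)" if "F \<in> ksubsets B (k - j)" for F j
    using measurable_lam_component that ksubsets_mono[OF \<open>B \<subseteq> M\<close>] by blast
  have [measurable]: "Measurable.pred ?N (\<lambda>x. fst (snd x) B0)" if "B0 \<in> ksubsets B (k - 1)" for B0
  proof -
    have "(\<lambda>x. fst (snd x)) \<in> ?N \<rightarrow>\<^sub>M lam k M 1" unfolding lam_bar_def by measurable
    then show ?thesis using comp[OF that] by (rule measurable_compose)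
  qed
  have [measurable]: "Measurable.pred ?N (\<lambda>x. snd (snd x) C0 B0)"
    if "C0 \<in> small_subsets k C" "B0 \<in> ksubsets B (k - 1 - card C0)" for C0 B0
  proof -
    have "(\<lambda>x. snd (snd x) C0) \<in> ?N \<rightarrow>\<^sub>M lam k M (1 + card C0)"
      using that(1) unfolding lam_bar_def by measurable
    moreover have "Measurable.pred (lam k M (1 + card C0)) (\<lambda>t. t B0)"
      using comp that(2) by (simp add: diff_diff_left)
    ultimately show ?thesis by (rule measurable_compose)
  qed
  have [measurable]: "(\<lambda>x. W (Warg_enum k isos (tf (fst x)) (fst (snd x)) (snd (snd x)) (slot_enum k C0)))
      \<in> borel_measurable ?N" if "C0 \<in> ksubsets C (k - 1)" for C0
    using measurable_Warg_enum[OF bij_betw_slot_enum[OF that] _ isos tf] W that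
    unfolding ksubsets_def by auto
  show ?thesis
    unfolding Xi_integrand_def case_prod_beta sgnW_def
    using finite_ksubsets[OF \<open>finite B\<close>] by measurable
qed

lemma measurable_Xi_integrand_tpflat:
  assumes "finite B" "B \<subseteq> M"
    and "\<forall>j\<in>{1..k - 1}. isos j \<in> lam k M j \<rightarrow>\<^sub>M unit_leb"
    and "W \<in> borel_measurable (hg_space k)"
  shows "Xi_integrand k isos W (tpflat k E M) B C \<epsilon> \<in> borel_measurable (lam_bar k M C)"
proof -
  let ?P = "count_space (UNIV :: unit set)"
  have "(\<lambda>x. Xi_integrand k isos W ((\<lambda>_. tpflat k E M) (fst x)) B C \<epsilon> (snd x))
      \<in> borel_measurable (?P \<Otimes>\<^sub>M lam_bar k M C)"
    by (rule measurable_Xi_integrand[OF assms(1-3) _ assms(4)]) (simp add: tpflat_in_space_lam)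
  moreover have "(\<lambda>y. ((), y)) \<in> lam_bar k M C \<rightarrow>\<^sub>M ?P \<Otimes>\<^sub>M lam_bar k M C"
    by simp
  ultimately have "(\<lambda>y. Xi_integrand k isos W (tpflat k E M) B C \<epsilon> (snd ((), y))) \<in> borel_measurable (lam_bar k M C)"
    by (rule measurable_compose[rotated])
  then show ?thesis by simp
qed

section \<open>Renaming the parameters outside \<open>M\<close>\<close>

lemma slot_type_permute:
  assumes \<tau>: "bij_betw \<tau> {1..k} {1..k}" "\<tau> 1 = 1" and h_\<tau>: "\<And>i. i \<in> {2..k} \<Longrightarrow> h (\<tau> i) = g i"
    and I: "I \<subseteq> {1..k}" "I \<noteq> {}"
  shows "slot_type tf p q h (\<tau> ` I) = slot_type tf p q g I"
proof -
  have inj: "inj_on \<tau> {1..k}" using \<tau>(1) by (rule bij_betw_imp_inj_on)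
  have "1 \<le> k" using I by auto
  have one: "1 \<in> \<tau> ` I \<longleftrightarrow> 1 \<in> I"
    using inj_on_image_mem_iff[OF inj, of 1 I] I \<tau>(2) \<open>1 \<le> k\<close> by auto
  have single: "\<tau> ` I = {1} \<longleftrightarrow> I = {1}"
    using inj_on_image_eq_iff[OF inj, of I "{1}"] I \<tau>(2) \<open>1 \<le> k\<close> by auto
  have minus: "\<tau> ` I - {1} = \<tau> ` (I - {1})"
    using inj_on_image_set_diff[OF inj, of I "{1}"] I \<tau>(2) \<open>1 \<le> k\<close> by auto
  have img: "h ` \<tau> ` J = g ` J" if "J \<subseteq> {2..k}" for J
    using h_\<tau> that by (force simp: image_image)
  consider "I = {1}" | "1 \<in> I" "I \<noteq> {1}" | "1 \<notin> I" by blast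
  then show ?thesis
  proof cases
    case 1
    then show ?thesis using single by (simp add: slot_type_def)
  next
    case 2
    have sub: "I - {1} \<subseteq> {2..k}" using I by auto
    have \<tau>I: "1 \<in> \<tau> ` I" "\<tau> ` I \<noteq> {1}" using 2 one single by auto
    show ?thesis
      unfolding slot_type_with_1[OF 2] slot_type_with_1[OF \<tau>I] minus img[OF sub] ..
  next
    case 3
    then show ?thesis
      using one subset_atLeast2_if_notin_1[OF I(1)] by (simp add: slot_type_without_1 img)
  qed
qed

lemma W_Warg_enum_reenumerate:
  assumes W: "borel_hypergraphon k W" and "k \<ge> 2"
    and g: "bij_betw g {2..k} C0" and h: "bij_betw h {2..k} C0"
    and sp: "Warg_enum k isos tf p q h \<in> space (hg_space k)"
  shows "W (Warg_enum k isos tf p q g) = W (Warg_enum k isos tf p q h)"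
proof -
  define \<tau> where "\<tau> i = (if i \<in> {2..k} then inv_into {2..k} h (g i) else i)" for i
  have "bij_betw (inv_into {2..k} h \<circ> g) {2..k} {2..k}"
    using bij_betw_trans[OF g bij_betw_inv_into[OF h]] .
  then have "bij_betw \<tau> {2..k} {2..k}"
    by (rule bij_betw_cong[THEN iffD1, rotated]) (simp add: \<tau>_def)
  moreover have "bij_betw \<tau> {1} {1}" by (simp add: \<tau>_def bij_betw_def)
  moreover have "{1..k} = {1} \<union> {2..k}" using \<open>k \<ge> 2\<close> by auto
  ultimately have \<tau>: "bij_betw \<tau> {1..k} {1..k}"
    using bij_betw_combine[of \<tau> "{1}" "{1}" "{2..k}" "{2..k}"] by auto
  have h_\<tau>: "h (\<tau> i) = g i" if "i \<in> {2..k}" for i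
  proof -
    have "g i \<in> h ` {2..k}" using bij_betwE[OF g] that h by (simp add: bij_betw_def)
    then show ?thesis using that unfolding \<tau>_def by (simp add: f_inv_into_f)
  qed
  have "Warg_enum k isos tf p q g = (\<lambda>I\<in>Ik k. Warg_enum k isos tf p q h (\<tau> ` I))"
    unfolding Warg_enum_def[of _ _ _ _ _ g]
  proof (rule restrict_ext)
    fix I assume I: "I \<in> Ik k"
    note Ip = mem_IkD[OF I]
    have card: "card (\<tau> ` I) = card I"
      using card_image inj_on_subset[OF bij_betw_imp_inj_on[OF \<tau>]] Ip by metis
    moreover have "\<tau> ` I \<in> Ik k" using card Ip \<tau> unfolding Ik_def bij_betw_def by auto
    moreover have "I \<noteq> {}" using Ip by auto
    moreover have "\<tau> 1 = 1" by (simp add: \<tau>_def)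
    ultimately show "isos (card I) (slot_type tf p q g I) = Warg_enum k isos tf p q h (\<tau> ` I)"
      unfolding Warg_enum_def using slot_type_permute[where g = g and h = h, OF \<tau> _ h_\<tau>] Ip by simp
  qed
  then show ?thesis using W \<tau> sp unfolding borel_hypergraphon_def by simp
qed

lemma Warg_enum_rename:
  assumes h: "bij_betw h {2..k} C0"
    and tf: "\<And>D. D \<subseteq> C0 \<Longrightarrow> D \<noteq> {} \<Longrightarrow> tf' D = tf (\<rho> ` D)"
    and q: "\<And>D. D \<in> small_subsets k C0 \<Longrightarrow> q' D = q (\<rho> ` D)"
  shows "Warg_enum k isos tf' p q' h = Warg_enum k isos tf p q (\<rho> \<circ> h)"
  unfolding Warg_enum_def
proof (rule restrict_ext)
  fix I assume I: "I \<in> Ik k"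
  consider "I = {1}" | "1 \<in> I" "I \<noteq> {1}" | "1 \<notin> I" by blast
  then have "slot_type tf' p q' h I = slot_type tf p q (\<rho> \<circ> h) I"
  proof cases
    case 1
    then show ?thesis by (simp add: slot_type_def)
  next
    case 2
    then show ?thesis
      using q[OF slot_image_with_1(1)[OF h I 2]] by (simp add: slot_type_with_1 image_comp)
  next
    case 3
    then show ?thesis
      using tf slot_image_without_1[OF h I 3] by (simp add: slot_type_without_1 image_comp)
  qed
  then show "isos (card I) (slot_type tf' p q' h I) = isos (card I) (slot_type tf p q (\<rho> \<circ> h) I)"
    by simp
qed

lemma Warg_enum_in_space:
  assumes g: "bij_betw g {2..k} C0" and "C0 \<subseteq> C"
    and isos: "\<forall>j\<in>{1..k - 1}. isos j \<in> lam k M j \<rightarrow>\<^sub>M unit_leb"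
    and p: "p \<in> space (lam k M 1)"
    and q: "q \<in> space (PiM (small_subsets k C) (\<lambda>D. lam k M (1 + card D)))"
    and tf: "\<And>D. tf D \<in> space (lam k M (card D))"
  shows "Warg_enum k isos tf p q g \<in> space (hg_space k)"
proof -
  have "isos (card I) t \<in> {0..1}" if "I \<in> Ik k" "t \<in> space (lam k M (card I))" for I t
    using measurable_space[of "isos (card I)" "lam k M (card I)" unit_leb t] isos that mem_IkD[OF that(1)]
    unfolding unit_leb_def by (auto simp: space_restrict_space)
  moreover have "slot_type tf p q g I \<in> space (lam k M (card I))" if I: "I \<in> Ik k" for I
  proof -
    consider "I = {1}" | "1 \<in> I" "I \<noteq> {1}" | "1 \<notin> I" by blast
    then show ?thesis
    proof cases
      case 1
      then show ?thesis using p by (simp add: slot_type_def)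
    next
      case 2
      note D = slot_image_with_1[OF g I 2]
      have "g ` (I - {1}) \<in> small_subsets k C" using D(1) \<open>C0 \<subseteq> C\<close> unfolding small_subsets_def by auto
      then have "q (g ` (I - {1})) \<in> space (lam k M (1 + card (g ` (I - {1}))))"
        using q by (auto simp: space_PiM)
      then show ?thesis using D(2) by (simp add: slot_type_with_1[OF 2])
    next
      case 3
      then show ?thesis using tf[of "g ` I"] slot_image_without_1(3)[OF g I 3]
        by (simp add: slot_type_without_1)
    qed
  qed
  ultimately show ?thesis
    unfolding Warg_enum_def hg_space_def unit_leb_def by (auto simp: space_PiM space_restrict_space)
qed

lemma W_Warg_enum_rename:
  assumes W: "borel_hypergraphon k W" and "k \<ge> 2"
    and C0: "C0 \<in> ksubsets C (k - 1)" and inj: "inj_on \<rho> C0"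
    and tf: "\<And>D. D \<subseteq> C0 \<Longrightarrow> D \<noteq> {} \<Longrightarrow> tf' D = tf (\<rho> ` D)"
    and q: "\<And>D. D \<in> small_subsets k C0 \<Longrightarrow> q' D = q (\<rho> ` D)"
    and sp: "Warg_enum k isos tf p q (slot_enum k (\<rho> ` C0)) \<in> space (hg_space k)"
  shows "W (Warg_enum k isos tf' p q' (slot_enum k C0)) = W (Warg_enum k isos tf p q (slot_enum k (\<rho> ` C0)))"
proof -
  have h: "bij_betw (slot_enum k C0) {2..k} C0" by (rule bij_betw_slot_enum[OF C0])
  have "\<rho> ` C0 \<in> ksubsets (\<rho> ` C0) (k - 1)"
    using C0 card_image[OF inj] unfolding ksubsets_def by auto
  then have g: "bij_betw (slot_enum k (\<rho> ` C0)) {2..k} (\<rho> ` C0)" by (rule bij_betw_slot_enum)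
  have "bij_betw (\<rho> \<circ> slot_enum k C0) {2..k} (\<rho> ` C0)"
    using bij_betw_trans[OF h inj_on_imp_bij_betw[OF inj]] .
  then have "W (Warg_enum k isos tf p q (\<rho> \<circ> slot_enum k C0)) = W (Warg_enum k isos tf p q (slot_enum k (\<rho> ` C0)))"
    by (rule W_Warg_enum_reenumerate[OF W \<open>k \<ge> 2\<close> _ g sp])
  moreover have "Warg_enum k isos tf' p q' (slot_enum k C0) = Warg_enum k isos tf p q (\<rho> \<circ> slot_enum k C0)"
    by (rule Warg_enum_rename[OF h]) (simp_all add: tf q)
  ultimately show ?thesis by simp
qed

definition relabel_slots :: "nat \<Rightarrow> ('a \<Rightarrow> 'a) \<Rightarrow> 'a set \<Rightarrow> ('a set \<Rightarrow> 'b) \<Rightarrow> 'a set \<Rightarrow> 'b" where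
  "relabel_slots k \<rho> C' q = (\<lambda>C0\<in>small_subsets k C'. q (\<rho> ` C0))"

lemma
  assumes "bij_betw \<rho> C' C"
  shows measurable_relabel_slots:
      "(\<lambda>(x, q). (x, relabel_slots k \<rho> C' q)) \<in> lam_bar k M C \<rightarrow>\<^sub>M lam_bar k M C'"
    and distr_lam_bar_relabel:
      "distr (lam_bar k M C) (lam_bar k M C') (\<lambda>(x, q). (x, relabel_slots k \<rho> C' q)) = lam_bar k M C'"
proof -
  let ?Pi = "\<lambda>C. PiM (small_subsets k C) (\<lambda>C0. lam k M (1 + card C0))"
  have bij: "bij_betw ((`) \<rho>) (small_subsets k C') (small_subsets k C)"
    by (rule bij_betw_image_small_subsets[OF assms])
  have card: "card (\<rho> ` C0) = card C0" if "C0 \<in> small_subsets k C'" for C0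
  proof -
    have "C0 \<subseteq> C'" using that unfolding small_subsets_def by simp
    then show ?thesis using card_image inj_on_subset[OF bij_betw_imp_inj_on[OF assms]] by blast
  qed
  have T: "relabel_slots k \<rho> C' \<in> ?Pi C \<rightarrow>\<^sub>M ?Pi C'"
    unfolding relabel_slots_def
  proof (rule measurable_restrict)
    fix C0 assume C0: "C0 \<in> small_subsets k C'"
    have "(\<lambda>q. q (\<rho> ` C0)) \<in> ?Pi C \<rightarrow>\<^sub>M lam k M (1 + card (\<rho> ` C0))"
      by (rule measurable_component_singleton[OF bij_betwE[OF bij, rule_format, OF C0]])
    then show "(\<lambda>q. q (\<rho> ` C0)) \<in> ?Pi C \<rightarrow>\<^sub>M lam k M (1 + card C0)" using card[OF C0] by simp
  qed
  then show "(\<lambda>(x, q). (x, relabel_slots k \<rho> C' q)) \<in> lam_bar k M C \<rightarrow>\<^sub>M lam_bar k M C'"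
    unfolding lam_bar_def using T by measurable
  note reindex = distr_PiM_reindex[of "small_subsets k C" "\<lambda>C0. lam k M (1 + card C0)", OF prob_space_lam
      bij_betw_imp_inj_on[OF bij] bij_betw_imp_funcset[OF bij]]
  have "PiM (small_subsets k C') (\<lambda>C0. lam k M (1 + card (\<rho> ` C0))) = ?Pi C'"
    by (rule PiM_cong) (simp_all add: card)
  with reindex have distr: "distr (?Pi C) (?Pi C') (relabel_slots k \<rho> C') = ?Pi C'"
    unfolding relabel_slots_def by simp
  have "sigma_finite_measure (distr (?Pi C) (?Pi C') (relabel_slots k \<rho> C'))"
    unfolding distr by (rule prob_space_imp_sigma_finite) (intro prob_space_PiM prob_space_lam)
  from pair_measure_distr[OF measurable_ident_sets[OF refl] T this]
  have "distr (lam k M 1) (lam k M 1) (\<lambda>x. x) \<Otimes>\<^sub>M distr (?Pi C) (?Pi C') (relabel_slots k \<rho> C')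
      = distr (lam_bar k M C) (lam_bar k M C') (\<lambda>(x, q). (x, relabel_slots k \<rho> C' q))"
    unfolding lam_bar_def by simp
  then show "distr (lam_bar k M C) (lam_bar k M C') (\<lambda>(x, q). (x, relabel_slots k \<rho> C' q)) = lam_bar k M C'"
    unfolding distr lam_bar_def by (simp add: distr_id)
qed

locale param_renaming =
  fixes M A' A :: "'a set" and \<rho> :: "'a \<Rightarrow> 'a"
  assumes bij: "bij_betw \<rho> A' A"
    and fix_M: "\<And>x. x \<in> A' \<Longrightarrow> x \<in> M \<Longrightarrow> \<rho> x = x"
    and out_M: "\<And>x. x \<in> A' \<Longrightarrow> x \<notin> M \<Longrightarrow> \<rho> x \<notin> M"
begin

lemma inter_M: "A \<inter> M = A' \<inter> M"
  using bij fix_M out_M unfolding bij_betw_def by force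

lemma bij_outside_M: "bij_betw \<rho> (A' - M) (A - M)"
proof (rule bij_betw_subset[OF bij])
  show "\<rho> ` (A' - M) = A - M" using bij fix_M out_M unfolding bij_betw_def by force
qed auto

lemma image_inside_M: "B \<subseteq> A' \<inter> M \<Longrightarrow> \<rho> ` B = B"
  using fix_M by force

lemma prod_small_subsets_relabel:
  assumes eps: "\<forall>S\<in>ksubsets A' (k - 1). \<epsilon>' S = \<epsilon> (\<rho> ` S)"
  shows "(\<Prod>C0\<in>small_subsets k (A - M). \<Prod>B0\<in>ksubsets (A \<inter> M) (k - 1 - card C0).
            of_bool (q C0 B0 = \<epsilon> (B0 \<union> C0)) :: real)
       = (\<Prod>C0\<in>small_subsets k (A' - M). \<Prod>B0\<in>ksubsets (A' \<inter> M) (k - 1 - card C0).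
            of_bool (relabel_slots k \<rho> (A' - M) q C0 B0 = \<epsilon>' (B0 \<union> C0)))"
  (is "?lhs = ?rhs")
proof -
  have "?lhs = (\<Prod>C0\<in>small_subsets k (A' - M). \<Prod>B0\<in>ksubsets (A \<inter> M) (k - 1 - card (\<rho> ` C0)).
                 of_bool (q (\<rho> ` C0) B0 = \<epsilon> (B0 \<union> \<rho> ` C0)))"
    by (rule prod.reindex_bij_betw[OF bij_betw_image_small_subsets[OF bij_outside_M], symmetric])
  also have "\<dots> = ?rhs"
  proof (rule prod.cong[OF refl])
    fix C0 assume C0: "C0 \<in> small_subsets k (A' - M)"
    then have fin: "finite C0" and sub: "C0 \<subseteq> A' - M"
      unfolding small_subsets_def by (auto intro: card_ge_0_finite)
    have card: "card (\<rho> ` C0) = card C0"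
      using card_image inj_on_subset[OF bij_betw_imp_inj_on[OF bij_outside_M] sub] by blast
    have "\<epsilon>' (B0 \<union> C0) = \<epsilon> (B0 \<union> \<rho> ` C0)" if B0: "B0 \<in> ksubsets (A' \<inter> M) (k - 1 - card C0)" for B0
    proof -
      have "B0 \<inter> C0 = {}" using B0 sub unfolding ksubsets_def by auto
      then have "card (B0 \<union> C0) = k - 1"
        using B0 C0 fin card_Un_disjoint[of B0 C0] unfolding ksubsets_def small_subsets_def by auto
      then have "B0 \<union> C0 \<in> ksubsets A' (k - 1)" using B0 sub fin unfolding ksubsets_def by auto
      then show ?thesis using eps image_inside_M[of B0] B0 unfolding ksubsets_def by (auto simp: image_Un)
    qed
    then show "(\<Prod>B0\<in>ksubsets (A \<inter> M) (k - 1 - card (\<rho> ` C0)). of_bool (q (\<rho> ` C0) B0 = \<epsilon> (B0 \<union> \<rho> ` C0)))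
        = (\<Prod>B0\<in>ksubsets (A' \<inter> M) (k - 1 - card C0). of_bool (relabel_slots k \<rho> (A' - M) q C0 B0 = \<epsilon>' (B0 \<union> C0)))"
      using C0 unfolding card inter_M relabel_slots_def by simp
  qed
  finally show ?thesis .
qed

lemma prod_W_relabel:
  assumes W: "borel_hypergraphon k W" and "k \<ge> 2"
    and isos: "\<forall>j\<in>{1..k - 1}. isos j \<in> lam k M j \<rightarrow>\<^sub>M unit_leb"
    and eps: "\<forall>S\<in>ksubsets A' (k - 1). \<epsilon>' S = \<epsilon> (\<rho> ` S)"
    and tf: "\<forall>D. D \<subseteq> A' - M \<and> D \<noteq> {} \<and> card D \<le> k - 1 \<longrightarrow> tf' D = tf (\<rho> ` D)"
    and tf_space: "\<And>D. tf D \<in> space (lam k M (card D))"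
    and x: "x \<in> space (lam k M 1)"
    and q: "q \<in> space (PiM (small_subsets k (A - M)) (\<lambda>C0. lam k M (1 + card C0)))"
  shows "(\<Prod>C0\<in>ksubsets (A - M) (k - 1). sgnW (\<epsilon> C0) (W (Warg_enum k isos tf x q (slot_enum k C0))))
       = (\<Prod>C0\<in>ksubsets (A' - M) (k - 1).
            sgnW (\<epsilon>' C0) (W (Warg_enum k isos tf' x (relabel_slots k \<rho> (A' - M) q) (slot_enum k C0))))"
  (is "?lhs = ?rhs")
proof -
  have "?lhs = (\<Prod>C0\<in>ksubsets (A' - M) (k - 1).
                 sgnW (\<epsilon> (\<rho> ` C0)) (W (Warg_enum k isos tf x q (slot_enum k (\<rho> ` C0)))))"
    by (rule prod.reindex_bij_betw[OF bij_betw_image_ksubsets[OF bij_outside_M], symmetric])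
  also have "\<dots> = ?rhs"
  proof (rule prod.cong[OF refl])
    fix C0 assume C0: "C0 \<in> ksubsets (A' - M) (k - 1)"
    have inj: "inj_on \<rho> C0"
      using C0 inj_on_subset[OF bij_betw_imp_inj_on[OF bij]] unfolding ksubsets_def by auto
    have \<rho>C0: "\<rho> ` C0 \<in> ksubsets (A - M) (k - 1)"
      using bij_betwE[OF bij_betw_image_ksubsets[OF bij_outside_M]] C0 by simp
    have sp: "Warg_enum k isos tf x q (slot_enum k (\<rho> ` C0)) \<in> space (hg_space k)"
      using \<rho>C0 unfolding ksubsets_def
      by (intro Warg_enum_in_space[OF bij_betw_slot_enum[OF \<rho>C0] _ isos x q tf_space]) auto
    have tf_C0: "tf' D = tf (\<rho> ` D)" if "D \<subseteq> C0" "D \<noteq> {}" for D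
    proof -
      have "card D \<le> k - 1" using that(1) C0 card_mono[of C0 D] unfolding ksubsets_def by auto
      then show ?thesis using tf that C0 unfolding ksubsets_def by auto
    qed
    have q_C0: "relabel_slots k \<rho> (A' - M) q D = q (\<rho> ` D)" if "D \<in> small_subsets k C0" for D
      using that C0 unfolding relabel_slots_def small_subsets_def ksubsets_def by auto
    have "W (Warg_enum k isos tf' x (relabel_slots k \<rho> (A' - M) q) (slot_enum k C0))
        = W (Warg_enum k isos tf x q (slot_enum k (\<rho> ` C0)))"
      using tf_C0 q_C0 sp by (rule W_Warg_enum_rename[OF W \<open>k \<ge> 2\<close> C0 inj])
    moreover have "\<epsilon>' C0 = \<epsilon> (\<rho> ` C0)" using eps C0 unfolding ksubsets_def by auto
    ultimately show "sgnW (\<epsilon> (\<rho> ` C0)) (W (Warg_enum k isos tf x q (slot_enum k (\<rho> ` C0))))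
        = sgnW (\<epsilon>' C0) (W (Warg_enum k isos tf' x (relabel_slots k \<rho> (A' - M) q) (slot_enum k C0)))"
      by simp
  qed
  finally show ?thesis .
qed

lemma Xi_integrand_relabel:
  assumes W: "borel_hypergraphon k W" and "k \<ge> 2"
    and isos: "\<forall>j\<in>{1..k - 1}. isos j \<in> lam k M j \<rightarrow>\<^sub>M unit_leb"
    and eps: "\<forall>S\<in>ksubsets A' (k - 1). \<epsilon>' S = \<epsilon> (\<rho> ` S)"
    and tf: "\<forall>D. D \<subseteq> A' - M \<and> D \<noteq> {} \<and> card D \<le> k - 1 \<longrightarrow> tf' D = tf (\<rho> ` D)"
    and tf_space: "\<And>D. tf D \<in> space (lam k M (card D))"
    and xq: "(x, q) \<in> space (lam_bar k M (A - M))"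
  shows "Xi_integrand k isos W tf' (A' \<inter> M) (A' - M) \<epsilon>' (x, relabel_slots k \<rho> (A' - M) q)
       = Xi_integrand k isos W tf (A \<inter> M) (A - M) \<epsilon> (x, q)"
proof -
  have x: "x \<in> space (lam k M 1)"
    and q: "q \<in> space (PiM (small_subsets k (A - M)) (\<lambda>C0. lam k M (1 + card C0)))"
    using xq unfolding lam_bar_def by (auto simp: space_pair_measure)
  have "\<epsilon>' B0 = \<epsilon> B0" if "B0 \<in> ksubsets (A' \<inter> M) (k - 1)" for B0
    using eps image_inside_M[of B0] that unfolding ksubsets_def by auto
  then have "(\<forall>B0\<in>ksubsets (A' \<inter> M) (k - 1). x B0 = \<epsilon>' B0) = (\<forall>B0\<in>ksubsets (A \<inter> M) (k - 1). x B0 = \<epsilon> B0)"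
    unfolding inter_M by auto
  then show ?thesis
    unfolding Xi_integrand_def case_prod_conv prod_small_subsets_relabel[OF eps]
      prod_W_relabel[OF W \<open>k \<ge> 2\<close> isos eps tf tf_space x q]
    by simp
qed

lemma muXi_rename:
  assumes "finite A'" and W: "borel_hypergraphon k W" and "k \<ge> 2"
    and isos: "\<forall>j\<in>{1..k - 1}. isos j \<in> lam k M j \<rightarrow>\<^sub>M unit_leb"
    and eps: "\<forall>S\<in>ksubsets A' (k - 1). \<epsilon>' S = \<epsilon> (\<rho> ` S)"
    and tf: "\<forall>D. D \<subseteq> A' - M \<and> D \<noteq> {} \<and> card D \<le> k - 1 \<longrightarrow> tpflat k E' M D = tpflat k E M (\<rho> ` D)"
  shows "muXi k E' M isos W A' \<epsilon>' = muXi k E M isos W A \<epsilon>"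
proof -
  let ?T = "\<lambda>(x, q). (x, relabel_slots k \<rho> (A' - M) q)"
  have "Xi_integrand k isos W (tpflat k E' M) (A' \<inter> M) (A' - M) \<epsilon>' \<in> borel_measurable (lam_bar k M (A' - M))"
    using \<open>finite A'\<close> isos W unfolding borel_hypergraphon_def by (intro measurable_Xi_integrand_tpflat) auto
  then have "muXi k E' M isos W A' \<epsilon>'
      = integral\<^sup>L (lam_bar k M (A - M)) (\<lambda>xq. Xi_integrand k isos W (tpflat k E' M) (A' \<inter> M) (A' - M) \<epsilon>' (?T xq))"
    unfolding muXi_eq_integral
    by (subst distr_lam_bar_relabel[OF bij_outside_M, symmetric])
      (rule integral_distr[OF measurable_relabel_slots[OF bij_outside_M]])
  also have "\<dots> = integral\<^sup>L (lam_bar k M (A - M)) (Xi_integrand k isos W (tpflat k E M) (A \<inter> M) (A - M) \<epsilon>)"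
    by (rule Bochner_Integration.integral_cong[OF refl])
      (auto intro: Xi_integrand_relabel[OF W \<open>k \<ge> 2\<close> isos eps tf tpflat_in_space_lam])
  finally show ?thesis unfolding muXi_eq_integral .
qed

end

section \<open>Which complete formulas contribute to \<open>\<mu>\<^sub>W(\<phi>(x, b))\<close>\<close>

fun hconj_list :: "'a hfm list \<Rightarrow> 'a hfm" where
  "hconj_list [] = HEq (HVar 0) (HVar 0)"
| "hconj_list (\<psi> # \<psi>s) = HConj \<psi> (hconj_list \<psi>s)"

lemma hsat_hconj_list: "hsat k U E e (hconj_list \<psi>s) \<longleftrightarrow> (\<forall>\<psi>\<in>set \<psi>s. hsat k U E e \<psi>)"
  by (induction \<psi>s) auto

lemma hfv_hconj_list: "hfv (hconj_list \<psi>s) \<subseteq> {0} \<union> (\<Union>\<psi>\<in>set \<psi>s. hfv \<psi>)"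
  by (induction \<psi>s) auto

lemma hpar_hconj_list: "hpar (hconj_list \<psi>s) = (\<Union>\<psi>\<in>set \<psi>s. hpar \<psi>)"
  by (induction \<psi>s) auto

text \<open>Positions are 1-based, matching the variables \<open>y\<^sub>i = HVar i\<close> of \<^const>\<open>benv\<close>.\<close>
definition pick :: "'a list \<Rightarrow> nat list \<Rightarrow> 'a list" where
  "pick bs J = map (\<lambda>j. bs ! (j - 1)) J"

definition fresh_fm :: "nat \<Rightarrow> 'a hfm" where
  "fresh_fm n = hconj_list (map (\<lambda>i. HNeg (HEq (HVar 0) (HVar i))) [1..<n+1])"

definition edge_fm :: "nat list \<Rightarrow> 'a hfm" where
  "edge_fm J = HRel (HVar 0 # map HVar J)"

definition pattern_fm :: "nat \<Rightarrow> nat \<Rightarrow> (nat list \<Rightarrow> bool) \<Rightarrow> 'a hfm" where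
  "pattern_fm k n e = hconj_list (map (\<lambda>J. if e J then edge_fm J else HNeg (edge_fm J))
      (List.n_lists (k - 1) [1..<n+1]))"

definition refuting_fm :: "nat \<Rightarrow> nat \<Rightarrow> (nat list \<Rightarrow> bool) \<Rightarrow> 'a hfm \<Rightarrow> 'a hfm" where
  "refuting_fm k n e \<phi> = HEx 0 (HConj (fresh_fm n) (HConj (pattern_fm k n e) (HNeg \<phi>)))"

lemma hfv_refuting_fm:
  assumes "hfv \<phi> \<subseteq> {0..n}"
  shows "hfv (refuting_fm k n e \<phi>) \<subseteq> {1..n}"
proof -
  have "hfv (fresh_fm n :: 'a hfm) \<subseteq> {0..n}"
    unfolding fresh_fm_def using hfv_hconj_list[of "map (\<lambda>i. HNeg (HEq (HVar 0) (HVar i))) [1..<n+1] :: 'a hfm list"]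
    by auto
  moreover have "hfv (pattern_fm k n e :: 'a hfm) \<subseteq> {0..n}"
    unfolding pattern_fm_def
    using hfv_hconj_list[of "map (\<lambda>J. if e J then edge_fm J else HNeg (edge_fm J)) (List.n_lists (k - 1) [1..<n+1]) :: 'a hfm list"]
    by (fastforce simp: edge_fm_def set_n_lists)
  ultimately show ?thesis using assms unfolding refuting_fm_def by auto
qed

lemma hpar_refuting_fm: "hpar (refuting_fm k n e \<phi>) = hpar \<phi>"
  unfolding refuting_fm_def fresh_fm_def pattern_fm_def
  by (simp only: hpar.simps hpar_hconj_list) (auto simp: edge_fm_def split: if_splits)

lemma refuting_fm_cong:
  assumes "\<And>J. J \<in> set (List.n_lists (k - 1) [1..<n+1]) \<Longrightarrow> e J = e' J"
  shows "refuting_fm k n e \<phi> = refuting_fm k n e' \<phi>"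
  unfolding refuting_fm_def pattern_fm_def using assms by (simp del: upt_Suc cong: map_cong)

lemma benv_upd_0: "(benv x bs)(0 := a) = benv a bs"
  by (rule ext) (simp add: benv_def)

lemma hsat_fresh_fm:
  assumes "length bs = n"
  shows "hsat k U E (benv a bs) (fresh_fm n) \<longleftrightarrow> a \<notin> set bs"
proof -
  have "hsat k U E (benv a bs) (fresh_fm n) \<longleftrightarrow> (\<forall>i\<in>{1..n}. a \<noteq> bs ! (i - 1))"
    unfolding fresh_fm_def hsat_hconj_list by (auto simp del: upt_Suc simp: benv_def)
  also have "\<dots> \<longleftrightarrow> (\<forall>i<n. a \<noteq> bs ! i)"
    unfolding image_Suc_lessThan[symmetric] by auto
  finally show ?thesis using assms by (auto simp: in_set_conv_nth)
qed

lemma hsat_pattern_fm: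
  assumes "k \<ge> 1" and "length bs = n"
  shows "hsat k U E (benv a bs) (pattern_fm k n e)
     \<longleftrightarrow> (\<forall>J\<in>set (List.n_lists (k - 1) [1..<n+1]). (set (a # pick bs J) \<in> E) = e J)"
proof -
  let ?Js = "set (List.n_lists (k - 1) [1..<n+1])"
  have edge: "hsat k U E (benv a bs) (edge_fm J) \<longleftrightarrow> set (a # pick bs J) \<in> E" if "J \<in> ?Js" for J
  proof -
    have "length J = k - 1" "set J \<subseteq> {1..n}" using that by (auto simp: set_n_lists)
    moreover have "map (tval (benv a bs)) (map HVar J) = pick bs J"
      using calculation by (auto simp: benv_def pick_def)
    ultimately show ?thesis using assms unfolding edge_fm_def by (auto simp: benv_def)
  qed
  have "hsat k U E (benv a bs) (pattern_fm k n e)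
      \<longleftrightarrow> (\<forall>J\<in>?Js. hsat k U E (benv a bs) (if e J then edge_fm J else HNeg (edge_fm J)))"
    unfolding pattern_fm_def hsat_hconj_list set_map by blast
  also have "\<dots> \<longleftrightarrow> (\<forall>J\<in>?Js. hsat k U E (benv a bs) (edge_fm J) = e J)"
    by (intro ball_cong refl) auto
  finally show ?thesis using edge by blast
qed

lemma hsat_refuting_fm:
  assumes "k \<ge> 1" and "length bs = n"
  shows "hsat k U E (benv x bs) (refuting_fm k n e \<phi>) \<longleftrightarrow>
    (\<exists>a\<in>U. a \<notin> set bs \<and> (\<forall>J\<in>set (List.n_lists (k - 1) [1..<n+1]). (set (a # pick bs J) \<in> E) = e J)
        \<and> \<not> hsat k U E (benv a bs) \<phi>)"
  unfolding refuting_fm_def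
  by (simp add: benv_upd_0 hsat_fresh_fm[OF assms(2)] hsat_pattern_fm[OF assms])

definition edge_pattern :: "nat \<Rightarrow> ('a set \<Rightarrow> bool) \<Rightarrow> 'a list \<Rightarrow> nat list \<Rightarrow> bool" where
  "edge_pattern k \<epsilon> bs J \<longleftrightarrow> card (set (pick bs J)) = k - 1 \<and> \<epsilon> (set (pick bs J))"

lemma set_pick_subset:
  assumes "J \<in> set (List.n_lists m [1..<length bs+1])"
  shows "set (pick bs J) \<subseteq> set bs"
proof -
  have "set J \<subseteq> {1..length bs}" using assms by (auto simp del: upt_Suc simp: set_n_lists)
  then have "j - 1 < length bs" if "j \<in> set J" for j using that by force
  then show ?thesis unfolding pick_def by auto
qed

lemma ex_pick_eq:
  assumes S: "S \<in> ksubsets (set bs) m"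
  shows "\<exists>J\<in>set (List.n_lists m [1..<length bs+1]). set (pick bs J) = S"
proof -
  obtain xs where xs: "set xs = S" "distinct xs" using S finite_distinct_list unfolding ksubsets_def by blast
  have len: "length xs = m" using xs S distinct_card unfolding ksubsets_def by fastforce
  define ix where "ix x = (SOME j. j < length bs \<and> bs ! j = x)" for x
  have ix: "ix x < length bs \<and> bs ! ix x = x" if "x \<in> set bs" for x
    unfolding ix_def using that in_set_conv_nth[of x bs] by (metis (mono_tags, lifting) someI)
  define J where "J = map (\<lambda>x. ix x + 1) xs"
  have "set xs \<subseteq> set bs" using xs S unfolding ksubsets_def by auto
  then have "J \<in> set (List.n_lists m [1..<length bs+1])" and "pick bs J = xs"
    unfolding J_def pick_def using ix len
    by (auto simp del: upt_Suc simp: set_n_lists comp_def intro!: map_idI)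
  then show ?thesis using xs(1) by metis
qed

lemma edge_pattern_rename:
  assumes h: "\<And>x. x \<in> set bs \<Longrightarrow> \<rho> (h x) = x"
    and eps: "\<forall>S\<in>ksubsets (set (map h bs)) (k - 1). \<epsilon>' S = \<epsilon> (\<rho> ` S)"
    and J: "J \<in> set (List.n_lists m [1..<length bs+1])"
  shows "edge_pattern k \<epsilon>' (map h bs) J = edge_pattern k \<epsilon> bs J"
proof -
  let ?S = "set (pick bs J)"
  have sub: "?S \<subseteq> set bs" using J by (rule set_pick_subset)
  have "set J \<subseteq> {1..length bs}" using J by (auto simp del: upt_Suc simp: set_n_lists)
  then have "j - 1 < length bs" if "j \<in> set J" for j using that by force
  then have "pick (map h bs) J = map h (pick bs J)" unfolding pick_def by auto
  moreover have "card (h ` ?S) = card ?S"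
    using card_image inj_on_subset[OF inj_on_inverseI[of _ \<rho>, OF h] sub] by blast
  moreover have "\<rho> ` h ` ?S = ?S" using h sub by (force simp: image_image)
  moreover have "h ` ?S \<subseteq> set (map h bs)" using sub by auto
  ultimately show ?thesis using eps unfolding edge_pattern_def ksubsets_def by auto
qed

lemma edge_pattern_iff:
  assumes "k \<ge> 1" and "E \<subseteq> ksubsets U k" and "a \<notin> set bs"
  shows "(\<forall>J\<in>set (List.n_lists (k - 1) [1..<length bs+1]). (set (a # pick bs J) \<in> E) = edge_pattern k \<epsilon> bs J)
     \<longleftrightarrow> (\<forall>S\<in>ksubsets (set bs) (k - 1). (insert a S \<in> E) = \<epsilon> S)"
proof
  assume L: "\<forall>J\<in>set (List.n_lists (k - 1) [1..<length bs+1]). (set (a # pick bs J) \<in> E) = edge_pattern k \<epsilon> bs J"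
  show "\<forall>S\<in>ksubsets (set bs) (k - 1). (insert a S \<in> E) = \<epsilon> S"
  proof
    fix S assume S: "S \<in> ksubsets (set bs) (k - 1)"
    then obtain J where "J \<in> set (List.n_lists (k - 1) [1..<length bs+1])" "set (pick bs J) = S"
      using ex_pick_eq by blast
    then show "(insert a S \<in> E) = \<epsilon> S" using L S unfolding edge_pattern_def ksubsets_def by auto
  qed
next
  assume R: "\<forall>S\<in>ksubsets (set bs) (k - 1). (insert a S \<in> E) = \<epsilon> S"
  show "\<forall>J\<in>set (List.n_lists (k - 1) [1..<length bs+1]). (set (a # pick bs J) \<in> E) = edge_pattern k \<epsilon> bs J"
  proof
    fix J assume J: "J \<in> set (List.n_lists (k - 1) [1..<length bs+1])"
    let ?S = "set (pick bs J)"
    have sub: "?S \<subseteq> set bs" using J by (rule set_pick_subset)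
    show "(set (a # pick bs J) \<in> E) = edge_pattern k \<epsilon> bs J"
    proof (cases "card ?S = k - 1")
      case True
      then show ?thesis using R sub unfolding edge_pattern_def ksubsets_def by auto
    next
      case False
      have "card (insert a ?S) = card ?S + 1" using \<open>a \<notin> set bs\<close> sub by (auto intro: card_insert_disjoint)
      then have "insert a ?S \<notin> E" using False \<open>k \<ge> 1\<close> assms(2) unfolding ksubsets_def by auto
      then show ?thesis using False unfolding edge_pattern_def by auto
    qed
  qed
qed

lemma refuting_fm_in_tp_iff:
  assumes "k \<ge> 1" and len: "length bs = n" and "E \<subseteq> ksubsets U k"
    and \<phi>: "hfv \<phi> \<subseteq> {0..n}" "hpar \<phi> \<subseteq> M"
  shows "refuting_fm k n (edge_pattern k \<epsilon> bs) \<phi> \<in> tp k U E M bs \<longleftrightarrow>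
    \<not> ({a\<in>U - set bs. \<forall>S\<in>ksubsets (set bs) (k - 1). (insert a S \<in> E) = \<epsilon> S} \<subseteq> {a\<in>U. hsat k U E (benv a bs) \<phi>})"
proof -
  have "hpar (refuting_fm k n (edge_pattern k \<epsilon> bs) \<phi>) \<subseteq> M"
    using \<phi>(2) by (simp add: hpar_refuting_fm)
  then have "refuting_fm k n (edge_pattern k \<epsilon> bs) \<phi> \<in> LM M {1..length bs}"
    using hfv_refuting_fm[OF \<phi>(1)] len unfolding LM_def by simp
  then have "refuting_fm k n (edge_pattern k \<epsilon> bs) \<phi> \<in> tp k U E M bs
      \<longleftrightarrow> hsat k U E (benv undefined bs) (refuting_fm k n (edge_pattern k \<epsilon> bs) \<phi>)"
    unfolding tp_def by blast
  also have "\<dots> \<longleftrightarrow> (\<exists>a\<in>U. a \<notin> set bs \<and> (\<forall>S\<in>ksubsets (set bs) (k - 1). (insert a S \<in> E) = \<epsilon> S)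
        \<and> \<not> hsat k U E (benv a bs) \<phi>)"
    unfolding hsat_refuting_fm[OF \<open>k \<ge> 1\<close> len] using edge_pattern_iff[OF assms(1,3)] len by blast
  finally show ?thesis by blast
qed

section \<open>Canonical parameters\<close>

definition first_pos :: "'a list \<Rightarrow> 'a \<Rightarrow> nat" where
  "first_pos bs x = (LEAST j. 1 \<le> j \<and> j \<le> length bs \<and> bs ! (j - 1) = x)"

definition canon_param :: "'a set \<Rightarrow> (nat \<Rightarrow> 'a) \<Rightarrow> 'a list \<Rightarrow> 'a \<Rightarrow> 'a" where
  "canon_param M c bs x = (if x \<in> M then x else c (first_pos bs x))"

definition uncanon_param :: "'a set \<Rightarrow> (nat \<Rightarrow> 'a) \<Rightarrow> 'a list \<Rightarrow> 'a \<Rightarrow> 'a" where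
  "uncanon_param M c bs y = (if y \<in> M then y else bs ! (inv c y - 1))"

definition type_entry :: "'a set \<Rightarrow> 'a hfm set \<Rightarrow> nat \<Rightarrow> 'a + nat" where
  "type_entry M p i =
     (if \<exists>m\<in>M. HEq (HVar i) (HPar m) \<in> p then Inl (SOME m. m \<in> M \<and> HEq (HVar i) (HPar m) \<in> p)
      else Inr (LEAST j. HEq (HVar i) (HVar j) \<in> p))"

definition type_shape :: "'a set \<Rightarrow> nat \<Rightarrow> 'a hfm set \<Rightarrow> ('a + nat) list" where
  "type_shape M n p = map (type_entry M p) [1..<n+1]"

definition shape_params :: "(nat \<Rightarrow> 'a) \<Rightarrow> ('a + nat) list \<Rightarrow> 'a list" where
  "shape_params c s = map (case_sum id c) s"

definition distinct_list_of :: "'a set \<Rightarrow> 'a list" where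
  "distinct_list_of X = (SOME xs. set xs = X \<and> distinct xs)"

definition edge_terms :: "'a set \<Rightarrow> (nat \<Rightarrow> 'a) \<Rightarrow> 'a set \<Rightarrow> 'a htm list" where
  "edge_terms M c T = map (\<lambda>y. HVar (inv c y)) (distinct_list_of (T - M)) @ map HPar (distinct_list_of (T \<inter> M))"

text \<open>The edges among \<open>M\<close> and the canonical parameters asserted by the type \<open>p\<close> of shape \<open>s\<close>;
  in formulas the canonical parameter \<open>c j\<close> is represented by the variable \<open>y\<^sub>j = HVar j\<close>.\<close>
definition type_edges :: "'a set \<Rightarrow> (nat \<Rightarrow> 'a) \<Rightarrow> ('a + nat) list \<Rightarrow> 'a hfm set \<Rightarrow> 'a set set" where
  "type_edges M c s p = {T. finite T \<and> T - M \<subseteq> set (shape_params c s) \<and> HRel (edge_terms M c T) \<in> p}"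

lemma distinct_list_of_spec: "finite X \<Longrightarrow> set (distinct_list_of X) = X \<and> distinct (distinct_list_of X)"
  unfolding distinct_list_of_def using finite_distinct_list by (metis (mono_tags, lifting) someI_ex)

lemma first_pos_spec:
  assumes "x \<in> set bs"
  shows "1 \<le> first_pos bs x \<and> first_pos bs x \<le> length bs \<and> bs ! (first_pos bs x - 1) = x"
proof -
  obtain i where "i < length bs" "bs ! i = x" using assms by (auto simp: in_set_conv_nth)
  then have "1 \<le> Suc i \<and> Suc i \<le> length bs \<and> bs ! (Suc i - 1) = x" by auto
  then show ?thesis unfolding first_pos_def by (rule LeastI)
qed

lemma mem_tp_iff:
  "\<psi> \<in> tp k U E M bs \<longleftrightarrow> hpar \<psi> \<subseteq> M \<and> hfv \<psi> \<subseteq> {1..length bs} \<and> hsat k U E (benv undefined bs) \<psi>"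
  by (simp add: tp_def LM_def)

locale canonical_params =
  fixes M :: "'a set" and c :: "nat \<Rightarrow> 'a"
  assumes inj_c: "inj c" and c_notin_M: "\<And>j. c j \<notin> M"
begin

lemma uncanon_canon: "x \<in> set bs \<Longrightarrow> uncanon_param M c bs (canon_param M c bs x) = x"
  unfolding uncanon_param_def canon_param_def using first_pos_spec[of x bs] c_notin_M inj_c by (auto simp: inv_f_f)

lemma canon_param_in_M_iff: "canon_param M c bs x \<in> M \<longleftrightarrow> x \<in> M"
  unfolding canon_param_def using c_notin_M by auto

lemma bij_betw_uncanon: "bij_betw (uncanon_param M c bs) (canon_param M c bs ` set bs) (set bs)"
  unfolding bij_betw_def inj_on_def using uncanon_canon by (force simp: image_image)

lemma inj_on_canon: "inj_on (canon_param M c bs) (set bs)"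
  by (metis inj_onI uncanon_canon)

lemma param_renaming_uncanon:
  "param_renaming M (canon_param M c bs ` set bs) (set bs) (uncanon_param M c bs)"
proof
  show "bij_betw (uncanon_param M c bs) (canon_param M c bs ` set bs) (set bs)"
    by (rule bij_betw_uncanon)
  show "uncanon_param M c bs y = y" if "y \<in> M" for y
    using that by (simp add: uncanon_param_def)
  show "uncanon_param M c bs y \<notin> M" if "y \<in> canon_param M c bs ` set bs" "y \<notin> M" for y
    using that uncanon_canon canon_param_in_M_iff by auto
qed

lemma shape_params_type_shape:
  assumes len: "length bs = n"
  shows "shape_params c (type_shape M n (tp k U E M bs)) = map (canon_param M c bs) bs"
proof (rule nth_equalityI)
  show "length (shape_params c (type_shape M n (tp k U E M bs))) = length (map (canon_param M c bs) bs)"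
    using len by (simp add: shape_params_def type_shape_def)
  fix i assume "i < length (shape_params c (type_shape M n (tp k U E M bs)))"
  then have i: "i < n" by (simp add: shape_params_def type_shape_def del: upt_Suc)
  have par: "HEq (HVar (Suc i)) (HPar m) \<in> tp k U E M bs \<longleftrightarrow> m \<in> M \<and> bs ! i = m" for m
    using i len by (auto simp: mem_tp_iff benv_def)
  have var: "HEq (HVar (Suc i)) (HVar j) \<in> tp k U E M bs \<longleftrightarrow> 1 \<le> j \<and> j \<le> length bs \<and> bs ! (j - 1) = bs ! i" for j
    using i len by (auto simp: mem_tp_iff benv_def)
  have "type_entry M (tp k U E M bs) (Suc i) = (if bs ! i \<in> M then Inl (bs ! i) else Inr (first_pos bs (bs ! i)))"
    unfolding type_entry_def par var first_pos_def by auto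
  moreover have "type_shape M n (tp k U E M bs) ! i = type_entry M (tp k U E M bs) (Suc i)"
    unfolding type_shape_def using i by (simp del: upt_Suc)
  ultimately show "shape_params c (type_shape M n (tp k U E M bs)) ! i = map (canon_param M c bs) bs ! i"
    using i len unfolding shape_params_def canon_param_def by (simp add: type_shape_def del: upt_Suc)
qed

lemma inv_c_canon:
  assumes "y \<in> canon_param M c bs ` set bs - M"
  shows "inv c y \<in> {1..length bs}" and "bs ! (inv c y - 1) = uncanon_param M c bs y"
proof -
  obtain x where x: "x \<in> set bs" "y = canon_param M c bs x" "x \<notin> M"
    using assms canon_param_in_M_iff by auto
  then have "inv c y = first_pos bs x" using inj_c unfolding canon_param_def by (simp add: inv_f_f)
  then show "inv c y \<in> {1..length bs}" and "bs ! (inv c y - 1) = uncanon_param M c bs y"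
    using first_pos_spec[OF x(1)] x uncanon_canon by auto
qed

lemma union_mem_type_edges_iff:
  assumes len: "length bs = n"
    and D: "D \<subseteq> canon_param M c bs ` set bs - M" and F: "F \<subseteq> M" "finite F"
    and card: "card D + card F = k"
  shows "D \<union> F \<in> type_edges M c (type_shape M n (tp k U E M bs)) (tp k U E M bs)
     \<longleftrightarrow> uncanon_param M c bs ` D \<union> F \<in> E"
proof -
  have "finite D" using D by (rule finite_subset) auto
  note lD = distinct_list_of_spec[OF this] and lF = distinct_list_of_spec[OF F(2)]
  have DF: "(D \<union> F) - M = D" "(D \<union> F) \<inter> M = F" using D F by auto
  let ?ts = "edge_terms M c (D \<union> F)"
  have ts: "?ts = map (\<lambda>y. HVar (inv c y)) (distinct_list_of D) @ map HPar (distinct_list_of F)"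
    unfolding edge_terms_def DF ..
  have inv_c: "inv c y \<in> {1..length bs}" "bs ! (inv c y - 1) = uncanon_param M c bs y" if "y \<in> D" for y
    using inv_c_canon[of y bs] D that by auto
  have "benv undefined bs (inv c y) = uncanon_param M c bs y" if "y \<in> D" for y
    using inv_c[OF that] by (simp add: benv_def)
  then have "set (map (tval (benv undefined bs)) ?ts) = uncanon_param M c bs ` D \<union> F"
    unfolding ts using lD lF by (simp add: image_image cong: image_cong)
  moreover have "length ?ts = k"
    unfolding ts using lD lF card distinct_card by (metis length_append length_map)
  ultimately have "hsat k U E (benv undefined bs) (HRel ?ts) \<longleftrightarrow> uncanon_param M c bs ` D \<union> F \<in> E"
    by simp
  moreover have "hpar (HRel ?ts) \<subseteq> M" unfolding ts using lF F(1) by auto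
  moreover have "hfv (HRel ?ts) \<subseteq> {1..length bs}" unfolding ts using lD inv_c by auto
  ultimately have "HRel ?ts \<in> tp k U E M bs \<longleftrightarrow> uncanon_param M c bs ` D \<union> F \<in> E"
    unfolding mem_tp_iff by blast
  moreover have "D \<union> F \<in> type_edges M c (type_shape M n (tp k U E M bs)) (tp k U E M bs) \<longleftrightarrow> HRel ?ts \<in> tp k U E M bs"
    unfolding type_edges_def shape_params_type_shape[OF len] using \<open>finite D\<close> F DF D by auto
  ultimately show ?thesis by blast
qed

lemma tpflat_type_edges:
  assumes len: "length bs = n"
    and D: "D \<subseteq> canon_param M c bs ` set bs - M" and "card D \<le> k"
  shows "tpflat k (type_edges M c (type_shape M n (tp k U E M bs)) (tp k U E M bs)) M D
       = tpflat k E M (uncanon_param M c bs ` D)"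
proof -
  have card: "card (uncanon_param M c bs ` D) = card D"
    using card_image inj_on_subset[OF bij_betw_imp_inj_on[OF bij_betw_uncanon]] D by blast
  have "D \<union> F \<in> type_edges M c (type_shape M n (tp k U E M bs)) (tp k U E M bs)
      \<longleftrightarrow> uncanon_param M c bs ` D \<union> F \<in> E" if "F \<in> ksubsets M (k - card D)" for F
    using union_mem_type_edges_iff[OF len D] that \<open>card D \<le> k\<close> unfolding ksubsets_def by auto
  then show ?thesis unfolding tpflat_def card by (intro restrict_ext) auto
qed

end

text \<open>\<open>\<mu>\<^sub>W(\<phi>(x, b))\<close> as a function of \<open>p = tp(b/M)\<close> and its shape \<open>s = type_shape M n p\<close>.\<close>
definition muW_of_type :: "nat \<Rightarrow> 'a set \<Rightarrow> (nat \<Rightarrow> ('a set \<Rightarrow> bool) \<Rightarrow> real) \<Rightarrow> ((nat set \<Rightarrow> real) \<Rightarrow> real)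
    \<Rightarrow> (nat \<Rightarrow> 'a) \<Rightarrow> nat \<Rightarrow> 'a hfm \<Rightarrow> ('a + nat) list \<Rightarrow> 'a hfm set \<Rightarrow> real" where
  "muW_of_type k M isos W c n \<phi> s p =
     (\<Sum>\<epsilon>\<in>ksubsets (set (shape_params c s)) (k - 1) \<rightarrow>\<^sub>E UNIV.
        if refuting_fm k n (edge_pattern k \<epsilon> (shape_params c s)) \<phi> \<in> p then 0
        else muXi k (type_edges M c s p) M isos W (set (shape_params c s)) \<epsilon>)"

lemma (in canonical_params) pullback_uncanon:
  assumes "S \<in> ksubsets (canon_param M c bs ` set bs) m"
  shows "(\<lambda>S\<in>ksubsets (set bs) m. \<epsilon> (canon_param M c bs ` S)) (uncanon_param M c bs ` S) = \<epsilon> S"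
proof -
  have "uncanon_param M c bs ` S \<in> ksubsets (set bs) m"
    using assms bij_betwE[OF bij_betw_image_ksubsets[OF bij_betw_uncanon]] by blast
  moreover have "canon_param M c bs ` uncanon_param M c bs ` S = S"
    using assms uncanon_canon unfolding ksubsets_def by (force simp: image_image)
  ultimately show ?thesis by simp
qed

lemma (in canonical_params) muW_eq_muW_of_type:
  assumes "k \<ge> 2" and "E \<subseteq> ksubsets U k" and len: "length bs = n"
    and \<phi>: "hfv \<phi> \<subseteq> {0..n}" "hpar \<phi> \<subseteq> M"
    and isos: "\<forall>j\<in>{1..k - 1}. isos j \<in> lam k M j \<rightarrow>\<^sub>M unit_leb"
    and W: "borel_hypergraphon k W"
  shows "muW k U E M isos W \<phi> bs = muW_of_type k M isos W c n \<phi> (type_shape M n (tp k U E M bs)) (tp k U E M bs)"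
proof -
  let ?h = "canon_param M c bs" and ?\<rho> = "uncanon_param M c bs"
  let ?p = "tp k U E M bs" and ?s = "type_shape M n (tp k U E M bs)"
  let ?Xi = "\<lambda>\<epsilon>. {a\<in>U - set bs. \<forall>S\<in>ksubsets (set bs) (k - 1). (insert a S \<in> E) = \<epsilon> S}"
  let ?Phi = "{a\<in>U. hsat k U E (benv a bs) \<phi>}"
  let ?pull = "\<lambda>\<epsilon>. \<lambda>S\<in>ksubsets (set bs) (k - 1). \<epsilon> (?h ` S)"
  interpret param_renaming M "?h ` set bs" "set bs" ?\<rho> by (rule param_renaming_uncanon)
  have "muW k U E M isos W \<phi> bs
      = (\<Sum>\<epsilon>\<in>ksubsets (set bs) (k - 1) \<rightarrow>\<^sub>E UNIV. if ?Xi \<epsilon> \<subseteq> ?Phi then muXi k E M isos W (set bs) \<epsilon> else 0)"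
    unfolding muW_def Let_def
    by (rule sum.inter_filter) (intro finite_PiE finite_ksubsets; simp)
  also have "\<dots> = (\<Sum>\<epsilon>\<in>ksubsets (?h ` set bs) (k - 1) \<rightarrow>\<^sub>E UNIV.
      if ?Xi (?pull \<epsilon>) \<subseteq> ?Phi then muXi k E M isos W (set bs) (?pull \<epsilon>) else 0)"
    by (rule sum_PiE_ksubsets_pullback[OF inj_on_imp_bij_betw[OF inj_on_canon] uncanon_canon])
  also have "\<dots> = muW_of_type k M isos W c n \<phi> ?s ?p"
    unfolding muW_of_type_def shape_params_type_shape[OF len] set_map
  proof (rule sum.cong[OF refl])
    fix \<epsilon> :: "'a set \<Rightarrow> bool" assume "\<epsilon> \<in> ksubsets (?h ` set bs) (k - 1) \<rightarrow>\<^sub>E UNIV"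
    have eps: "\<forall>S\<in>ksubsets (?h ` set bs) (k - 1). \<epsilon> S = ?pull \<epsilon> (?\<rho> ` S)"
      using pullback_uncanon[symmetric] by blast
    have "edge_pattern k \<epsilon> (map ?h bs) J = edge_pattern k (?pull \<epsilon>) bs J"
      if "J \<in> set (List.n_lists (k - 1) [1..<n+1])" for J
      using that len eps by (intro edge_pattern_rename[of bs ?\<rho> ?h k \<epsilon> "?pull \<epsilon>"]) (auto simp: uncanon_canon)
    then have "refuting_fm k n (edge_pattern k \<epsilon> (map ?h bs)) \<phi> = refuting_fm k n (edge_pattern k (?pull \<epsilon>) bs) \<phi>"
      by (rule refuting_fm_cong)
    then have "refuting_fm k n (edge_pattern k \<epsilon> (map ?h bs)) \<phi> \<in> ?p \<longleftrightarrow> \<not> ?Xi (?pull \<epsilon>) \<subseteq> ?Phi"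
      using refuting_fm_in_tp_iff[OF _ len \<open>E \<subseteq> ksubsets U k\<close> \<phi>] \<open>k \<ge> 2\<close> by simp
    moreover have "muXi k (type_edges M c ?s ?p) M isos W (?h ` set bs) \<epsilon> = muXi k E M isos W (set bs) (?pull \<epsilon>)"
      using tpflat_type_edges[OF len]
      by (intro muXi_rename[OF _ W \<open>k \<ge> 2\<close> isos eps]) auto
    ultimately show "(if ?Xi (?pull \<epsilon>) \<subseteq> ?Phi then muXi k E M isos W (set bs) (?pull \<epsilon>) else 0)
        = (if refuting_fm k n (edge_pattern k \<epsilon> (map ?h bs)) \<phi> \<in> ?p then 0
           else muXi k (type_edges M c ?s ?p) M isos W (?h ` set bs) \<epsilon>)"
      by simp
  qed
  finally show ?thesis .
qed

section \<open>Borel measurability on the type space\<close>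

lemma space_stone_borel: "space (stone_borel k M E n) = types k M E n"
  unfolding stone_borel_def by (simp add: space_measure_of_conv)

lemma pred_stone_borel_mem: "Measurable.pred (stone_borel k M E n) (\<lambda>p. \<psi> \<in> p)"
proof (cases "\<psi> \<in> LM M {1..n}")
  case True
  have "stone_open k M E n \<subseteq> Pow (types k M E n)"
    unfolding stone_open_def stone_basic_def by auto
  then have sets: "sets (stone_borel k M E n) = sigma_sets (types k M E n) (stone_open k M E n)"
    unfolding stone_borel_def by (rule sets_measure_of)
  have "stone_basic k M E n \<psi> \<in> stone_open k M E n"
    unfolding stone_open_def using True by (intro CollectI exI[of _ "{stone_basic k M E n \<psi>}"]) auto
  then show ?thesis
    unfolding pred_def space_stone_borel sets stone_basic_def[symmetric] by (rule sigma_sets.Basic)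
next
  case False
  then have "{p\<in>types k M E n. \<psi> \<in> p} = {}" unfolding types_def by auto
  then show ?thesis unfolding pred_def space_stone_borel by (simp only: sets.empty_sets)
qed

lemma types_finitely_satisfiable:
  "p \<in> types k M E n \<Longrightarrow> F \<subseteq> p \<Longrightarrow> finite F \<Longrightarrow>
    \<exists>e. (\<forall>i. e i \<in> M) \<and> (\<forall>\<psi>\<in>F. hsat k M (induced_edges E M) e \<psi>)"
  unfolding types_def by auto

lemma types_HEq_HPar_unique:
  assumes "p \<in> types k M E n" and "HEq (HVar i) (HPar m) \<in> p" "HEq (HVar i) (HPar m') \<in> p"
  shows "m = m'"
  using types_finitely_satisfiable[OF assms(1), of "{HEq (HVar i) (HPar m), HEq (HVar i) (HPar m')}"] assms(2,3)
  by auto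

lemma types_HEq_refl:
  assumes p: "p \<in> types k M E n" and "i \<in> {1..n}"
  shows "HEq (HVar i) (HVar i) \<in> p"
proof (rule ccontr)
  assume "HEq (HVar i) (HVar i) \<notin> p"
  moreover have "HEq (HVar i) (HVar i) \<in> LM M {1..n}" using \<open>i \<in> {1..n}\<close> unfolding LM_def by auto
  ultimately have "HNeg (HEq (HVar i) (HVar i)) \<in> p" using p unfolding types_def by blast
  then show False using types_finitely_satisfiable[OF p, of "{HNeg (HEq (HVar i) (HVar i))}"] by auto
qed

lemma Least_eq_iff_nat: "(\<exists>x. P x) \<Longrightarrow> ((LEAST x::nat. P x) = j) \<longleftrightarrow> P j \<and> (\<forall>j'<j. \<not> P j')"
  by (metis LeastI_ex Least_equality not_less_Least not_le)

lemma type_entry_eq_iff: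
  assumes p: "p \<in> types k M E n" and i: "i \<in> {1..n}" and "range f = M"
  shows "type_entry M p i = v \<longleftrightarrow> (case v of
      Inl m \<Rightarrow> m \<in> M \<and> HEq (HVar i) (HPar m) \<in> p
    | Inr j \<Rightarrow> (\<forall>l. HEq (HVar i) (HPar (f l)) \<notin> p) \<and> HEq (HVar i) (HVar j) \<in> p
               \<and> (\<forall>j'<j. HEq (HVar i) (HVar j') \<notin> p))"
proof (cases v)
  case (Inl m)
  have "(SOME m. m \<in> M \<and> HEq (HVar i) (HPar m) \<in> p) = m" if "m \<in> M" "HEq (HVar i) (HPar m) \<in> p"
    using that types_HEq_HPar_unique[OF p] by (intro some_equality) auto
  moreover have "(SOME m. m \<in> M \<and> HEq (HVar i) (HPar m) \<in> p) \<in> M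
      \<and> HEq (HVar i) (HPar (SOME m. m \<in> M \<and> HEq (HVar i) (HPar m) \<in> p)) \<in> p"
    if "\<exists>m\<in>M. HEq (HVar i) (HPar m) \<in> p"
    using that by (metis (mono_tags, lifting) someI_ex)
  ultimately show ?thesis unfolding type_entry_def Inl by auto
next
  case (Inr j)
  have "\<exists>j. HEq (HVar i) (HVar j) \<in> p" using types_HEq_refl[OF p i] by auto
  moreover have "(\<exists>m\<in>M. HEq (HVar i) (HPar m) \<in> p) \<longleftrightarrow> \<not> (\<forall>l. HEq (HVar i) (HPar (f l)) \<notin> p)"
    using \<open>range f = M\<close> by auto
  ultimately show ?thesis
    unfolding type_entry_def Inr using Least_eq_iff_nat[of "\<lambda>j. HEq (HVar i) (HVar j) \<in> p" j] by auto
qed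

text \<open>\<open>M\<close> is countable, so the existential quantifier over \<open>M\<close> in \<^const>\<open>type_entry\<close> becomes
  a countable union of basic sets.\<close>
lemma measurable_type_entry:
  assumes "countable M" "M \<noteq> {}" and i: "i \<in> {1..n}"
  shows "Measurable.pred (stone_borel k M E n) (\<lambda>p. type_entry M p i = v)"
proof -
  define f where "f = from_nat_into M"
  have "range f = M" unfolding f_def using assms by (simp add: range_from_nat_into)
  let ?Q = "\<lambda>p. case v of
      Inl m \<Rightarrow> m \<in> M \<and> HEq (HVar i) (HPar m) \<in> p
    | Inr j \<Rightarrow> (\<forall>l. HEq (HVar i) (HPar (f l)) \<notin> p) \<and> HEq (HVar i) (HVar j) \<in> p
               \<and> (\<forall>j'<j. HEq (HVar i) (HVar j') \<notin> p)"
  have "(type_entry M p i = v) = ?Q p" if "p \<in> space (stone_borel k M E n)" for p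
    using type_entry_eq_iff[OF _ i \<open>range f = M\<close>] that unfolding space_stone_borel by blast
  moreover have "Measurable.pred (stone_borel k M E n) ?Q"
  proof (cases v)
    case (Inl m)
    then show ?thesis using pred_stone_borel_mem by (cases "m \<in> M") simp_all
  next
    case (Inr j)
    have [measurable]: "Measurable.pred (stone_borel k M E n) (\<lambda>p. \<psi> \<in> p)" for \<psi>
      by (rule pred_stone_borel_mem)
    show ?thesis unfolding Inr sum.case by measurable
  qed
  ultimately show ?thesis by (rule measurable_cong[THEN iffD2])
qed

definition shapes :: "'a set \<Rightarrow> ('a + nat) list set" where
  "shapes M = lists (Inl ` M \<union> range Inr)"

lemma countable_shapes: "countable M \<Longrightarrow> countable (shapes M)"
  unfolding shapes_def by (intro countable_lists countable_Un countable_image) auto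

lemma type_shape_in_shapes: "type_shape M n p \<in> shapes M"
proof -
  have entry: "type_entry M p i \<in> Inl ` M \<union> range Inr" for i
  proof (cases "\<exists>m\<in>M. HEq (HVar i) (HPar m) \<in> p")
    case True
    then have "(SOME m. m \<in> M \<and> HEq (HVar i) (HPar m) \<in> p) \<in> M" by (metis (mono_tags, lifting) someI_ex)
    then show ?thesis unfolding type_entry_def using True by auto
  qed (auto simp: type_entry_def)
  show ?thesis unfolding shapes_def type_shape_def using entry by (intro in_listsI) force
qed

lemma measurable_type_shape:
  assumes "countable M" "M \<noteq> {}"
  shows "type_shape M n \<in> stone_borel k M E n \<rightarrow>\<^sub>M count_space (shapes M)"
proof (subst measurable_count_space_eq_countable[OF countable_shapes[OF assms(1)]], intro conjI ballI)
  show "type_shape M n \<in> space (stone_borel k M E n) \<rightarrow> shapes M"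
    using type_shape_in_shapes by auto
  fix s
  have "type_shape M n p = s \<longleftrightarrow> length s = n \<and> (\<forall>i\<in>{..<n}. type_entry M p (Suc i) = s ! i)" for p
    unfolding type_shape_def by (auto simp del: upt_Suc simp: list_eq_iff_nth_eq)
  moreover have "Measurable.pred (stone_borel k M E n) (\<lambda>p. \<forall>i\<in>{..<n}. type_entry M p (Suc i) = s ! i)"
    by (intro pred_intros_finite measurable_type_entry[OF assms]) auto
  ultimately have "Measurable.pred (stone_borel k M E n) (\<lambda>p. type_shape M n p = s)"
    by (cases "length s = n") simp_all
  then show "type_shape M n -` {s} \<inter> space (stone_borel k M E n) \<in> sets (stone_borel k M E n)"
    unfolding pred_def by (simp add: vimage_def Int_def conj_commute)
qed

lemma measurable_tpflat_type_edges:
  "(\<lambda>p. tpflat k (type_edges M c s p) M D) \<in> stone_borel k M E n \<rightarrow>\<^sub>M lam k M (card D)"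
  unfolding tpflat_def lam_def
proof (rule measurable_restrict)
  fix F
  have "Measurable.pred (stone_borel k M E n) (\<lambda>p. D \<union> F \<in> type_edges M c s p)"
    unfolding type_edges_def using pred_stone_borel_mem[where \<psi> = "HRel (edge_terms M c (D \<union> F))"]
    by (cases "finite D \<and> finite F \<and> D \<union> F - M \<subseteq> set (shape_params c s)") simp_all
  then show "(\<lambda>p. D \<union> F \<in> type_edges M c s p) \<in> stone_borel k M E n \<rightarrow>\<^sub>M measure_pmf (bernoulli_pmf (1/2))"
    by (simp cong: measurable_cong_sets)
qed

lemma measurable_muXi_type_edges:
  assumes "finite A"
    and isos: "\<forall>j\<in>{1..k - 1}. isos j \<in> lam k M j \<rightarrow>\<^sub>M unit_leb"
    and W: "W \<in> borel_measurable (hg_space k)"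
  shows "(\<lambda>p. muXi k (type_edges M c s p) M isos W A \<epsilon>) \<in> borel_measurable (stone_borel k M E n)"
proof -
  have "(\<lambda>x. Xi_integrand k isos W ((\<lambda>p. tpflat k (type_edges M c s p) M) (fst x)) (A \<inter> M) (A - M) \<epsilon> (snd x))
      \<in> borel_measurable (stone_borel k M E n \<Otimes>\<^sub>M lam_bar k M (A - M))"
    using \<open>finite A\<close> by (intro measurable_Xi_integrand[OF _ _ isos _ W] measurable_tpflat_type_edges) auto
  then have "(\<lambda>(p, xq). Xi_integrand k isos W (tpflat k (type_edges M c s p) M) (A \<inter> M) (A - M) \<epsilon> xq)
      \<in> borel_measurable (stone_borel k M E n \<Otimes>\<^sub>M lam_bar k M (A - M))"
    by (simp add: split_beta')
  with prob_space_imp_sigma_finite[OF prob_space_lam_bar]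
  show ?thesis unfolding muXi_eq_integral by (rule sigma_finite_measure.borel_measurable_lebesgue_integral)
qed

lemma measurable_muW_of_type:
  assumes "\<forall>j\<in>{1..k - 1}. isos j \<in> lam k M j \<rightarrow>\<^sub>M unit_leb"
    and "W \<in> borel_measurable (hg_space k)"
  shows "muW_of_type k M isos W c n \<phi> s \<in> borel_measurable (stone_borel k M E n)"
  unfolding muW_of_type_def
  by (intro borel_measurable_sum measurable_If[OF measurable_const] measurable_muXi_type_edges[OF _ assms]
      pred_stone_borel_mem[unfolded pred_def]) simp_all

lemma model_Tk_ex_outside_finite:
  assumes "model_Tk k U E" and "finite A"
  shows "\<exists>x\<in>U. x \<notin> A"
proof -
  have "\<forall>A \<A>. finite A \<and> A \<subseteq> U \<and> \<A> \<subseteq> ksubsets A (k - 1) \<longrightarrow>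
      (\<exists>x\<in>U - A. \<forall>S\<in>ksubsets A (k - 1). (insert x S \<in> E) \<longleftrightarrow> S \<in> \<A>)"
    using assms(1) unfolding model_Tk_def by (elim conjE)
  from this[rule_format, of "A \<inter> U" "{}"] show ?thesis using assms(2) by auto
qed

lemma saturated_ex_outside_countable:
  assumes model: "model_Tk k U E" and sat: "aleph1_saturated k U E"
    and "countable A" "A \<subseteq> U"
  shows "\<exists>x\<in>U. x \<notin> A"
proof -
  define \<Sigma> where "\<Sigma> = (\<lambda>b. HNeg (HEq (HVar 0) (HPar b))) ` A"
  have "\<forall>\<psi>\<in>\<Sigma>. hpar \<psi> \<subseteq> A \<and> hfv \<psi> \<subseteq> {0}" unfolding \<Sigma>_def by auto
  moreover have "\<forall>F. F \<subseteq> \<Sigma> \<and> finite F \<longrightarrow> (\<exists>x\<in>U. \<forall>\<psi>\<in>F. hsat k U E (\<lambda>_. x) \<psi>)"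
  proof (intro allI impI)
    fix F assume "F \<subseteq> \<Sigma> \<and> finite F"
    then obtain B where "B \<subseteq> A" "finite B" "F = (\<lambda>b. HNeg (HEq (HVar 0) (HPar b))) ` B"
      using finite_subset_image[of F _ A] unfolding \<Sigma>_def by blast
    moreover obtain x where "x \<in> U" "x \<notin> B" using model_Tk_ex_outside_finite[OF model \<open>finite B\<close>] by blast
    ultimately show "\<exists>x\<in>U. \<forall>\<psi>\<in>F. hsat k U E (\<lambda>_. x) \<psi>" by auto
  qed
  ultimately obtain x where "x \<in> U" "\<forall>\<psi>\<in>\<Sigma>. hsat k U E (\<lambda>_. x) \<psi>"
    using sat[unfolded aleph1_saturated_def, rule_format, of A \<Sigma>] assms(3,4) by blast
  then show ?thesis unfolding \<Sigma>_def by auto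
qed

lemma saturated_infinite_outside_countable:
  assumes "model_Tk k U E" and "aleph1_saturated k U E" and "countable M"
  shows "infinite (U - M)"
proof
  assume "finite (U - M)"
  then have "countable (M \<union> (U - M))" using \<open>countable M\<close> by (simp only: countable_Un_iff countable_finite)
  then have "countable U" by (rule countable_subset[rotated]) blast
  then show False using saturated_ex_outside_countable[OF assms(1,2)] by blast
qed

theorem proposition5p15:
  fixes k n :: nat and U M :: "'a set" and E :: "'a set set"
    and W :: "(nat set \<Rightarrow> real) \<Rightarrow> real"
    and isos :: "nat \<Rightarrow> ('a set \<Rightarrow> bool) \<Rightarrow> real"
    and \<phi> :: "'a hfm"
  assumes "k > 2"
    and "model_Tk k U E" and "aleph1_saturated k U E"
    and "elem_sub k U E M" and "countable M"
    and "borel_hypergraphon k W"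
    and "\<forall>j\<in>{1..k - 1}. measure_iso (lam k M j) unit_leb (isos j)"
    and "hwf k \<phi>" and "hpar \<phi> = {}" and "hfv \<phi> \<subseteq> {0..n}"
  shows "\<exists>g\<in>borel_measurable (stone_borel k M E n).
           \<forall>bs. set bs \<subseteq> U \<and> length bs = n \<longrightarrow> g (tp k U E M bs) = muW k U E M isos W \<phi> bs"
proof -
  have "M \<noteq> {}" using assms(4) unfolding elem_sub_def by auto
  have "E \<subseteq> ksubsets U k" using assms(2) unfolding model_Tk_def by auto
  have isos: "\<forall>j\<in>{1..k - 1}. isos j \<in> lam k M j \<rightarrow>\<^sub>M unit_leb"
    using assms(7) unfolding measure_iso_def by auto
  have "W \<in> borel_measurable (hg_space k)" using assms(6) unfolding borel_hypergraphon_def by auto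
  obtain c :: "nat \<Rightarrow> 'a" where "inj c" "range c \<subseteq> U - M"
    using infinite_countable_subset[OF saturated_infinite_outside_countable[OF assms(2,3,5)]] by blast
  then interpret canonical_params M c by unfold_locales auto
  define g where "g p = muW_of_type k M isos W c n \<phi> (type_shape M n p) p" for p
  have "g \<in> borel_measurable (stone_borel k M E n)"
    unfolding g_def
    by (rule measurable_compose_countable'[OF measurable_muW_of_type[OF isos \<open>W \<in> _\<close>]
          measurable_type_shape[OF \<open>countable M\<close> \<open>M \<noteq> {}\<close>] countable_shapes[OF \<open>countable M\<close>]])
  moreover have "g (tp k U E M bs) = muW k U E M isos W \<phi> bs" if "length bs = n" for bs
    unfolding g_def using muW_eq_muW_of_type[OF _ \<open>E \<subseteq> _\<close> that assms(10) _ isos assms(6)] assms(1,9) by simp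
  ultimately show ?thesis by blast
qed

end
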